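(* Let $\mathbf p$ and $\mathbf q$ be two multi-line queues with the same number $r$ of rows that are identical except that site $j_0$ of the last queue (row $r$) is terminal in $\mathbf p$ and non-terminal in $\mathbf q$. Then: (a) $w(\mathbf q)=w(\mathbf p)^{j_0\to}$; (b) if, starting from site $j_0$ in $w(\mathbf p)$ and going cyclically to the right, the first entry equal to the maximal particle size $r$ comes before any entry $\infty$, then $[\mathbf q]=t_k[\mathbf p]$, where $k=w(\mathbf p)_{j_0}$ is the size of the particle at site $j_0$ in $w(\mathbf p)$.
   Context: Fix a positive integer $n$; sites $1,\dots,n$ are arranged cyclically. A word is $w=w_1\cdots w_n\in\{1,2,\dots,\infty\}^n$; finite entries are particles, entries $\infty$ are empty sites. A type is a tuple $\mathbf m=(m_1,\dots,m_r)$ of positive integers with $m_1+\dots+m_r\le n$; a word has type $\mathbf m$ if it has exactly $m_i$ entries $i$ and all other entries $\infty$. Queues: a queue of capacity $c$ is a choice of $c$ of the $n$ sites, called terminal. Given an input word $x$ whose finite entries lie in $\{1,\dots,i-1\}$, replace each $\infty$ by $i$; then the $n$ particles enter the queue one at a time in an order in which smaller particles come before larger ones (ties arbitrary). A particle at site $j$ first visits site $j$, then $j+1,j+2,\dots$ cyclically, stopping at (and occupying) the first terminal site not yet occupied; if all terminal sites are occupied it visits every site and is discarded. The output $q(x)$ has at each terminal site the size of the particle occupying it and $\infty$ at each non-terminal site. For each size $s$ let $\alpha_s$ be the number of non-terminal sites whose first visitor has size $s$; the weight of $q$ with respect to $x$ is $\prod_s t_s^{\alpha_s}$. Multi-line queues: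 a multi-line queue of type $(m_1,\dots,m_r)$ is a sequence $(q_1,\dots,q_r)$ of queues with $q_i$ of capacity $m_1+\dots+m_i$. Feed $q_1$ the all-$\infty$ word and $q_{i}$ the output of $q_{i-1}$; the output word is $w(\mathbf q)=(q_r\circ\cdots\circ q_1)(\infty\cdots\infty)$. The weight $[\mathbf q]$ is the product over $i$ of the weight of $q_i$ with respect to its input. (Thus $\mathbf p$ and $\mathbf q$ above have types differing only in the last coordinate, by one.) Jumping operation: for a word $x$ and an index $j_0$ with $x_{j_0}\neq\infty$, define the jumping sequence $j_1,\dots,j_s$ recursively: $j_k$ is the first position cyclically to the right of $j_{k-1}$ such that $x_{j_k}$ is finite and strictly larger than $x_{j_{k-1}}$; if no such position exists the sequence stops and $s=k-1$. Define $y=x^{j_0\to}$ by $y_{j_k}=x_{j_{k-1}}$ for $1\le k\le s$, $y_{j_0}=\infty$, and $y_j=x_j$ at all other positions. *)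

theory Defs
  imports Main "HOL-Library.Extended_Nat" "HOL-Library.Product_Lexorder"
begin

(* Sites are 0,...,n-1 (paper: 1,...,n), arranged cyclically.
   Words are lists of length n over enat; \<infinity> = empty site. *)

(* size of the particle at site j when the input word x enters queue of row i
   (entries \<infinity> are replaced by i) *)
definition psize :: "enat list \<Rightarrow> nat \<Rightarrow> nat \<Rightarrow> nat" where
  "psize x i j = (case x ! j of enat v \<Rightarrow> v | \<infinity> \<Rightarrow> i)"

(* order in which particles enter: smaller particles first; ties broken by site
   (the paper allows arbitrary tie-breaking) *)
definition entry_order :: "nat \<Rightarrow> enat list \<Rightarrow> nat \<Rightarrow> nat list" where
  "entry_order n x i = sort_key (\<lambda>j. (psize x i j, j)) [0..<n]"

definition free_dists :: "nat \<Rightarrow> nat set \<Rightarrow> (nat \<Rightarrow> enat) \<Rightarrow> nat \<Rightarrow> nat set" where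
  "free_dists n T occ j = {d. d < n \<and> (j + d) mod n \<in> T \<and> occ ((j + d) mod n) = \<infinity>}"

(* one particle of size s starting at site j enters the queue;
   state = (occupation of sites, size of first visitor of sites), \<infinity> = none *)
definition qstep :: "nat \<Rightarrow> nat set \<Rightarrow> nat \<Rightarrow> nat \<Rightarrow>
    (nat \<Rightarrow> enat) \<times> (nat \<Rightarrow> enat) \<Rightarrow> (nat \<Rightarrow> enat) \<times> (nat \<Rightarrow> enat)" where
  "qstep n T s j st =
     (let occ = fst st; fv = snd st; F = free_dists n T occ j;
          lastd = (if F = {} then n - 1 else Min F);
          fv' = (\<lambda>p. if fv p = \<infinity> \<and> (\<exists>d\<le>lastd. p = (j + d) mod n) then enat s else fv p);
          occ' = (if F = {} then occ else occ((j + Min F) mod n := enat s))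
      in (occ', fv'))"

definition queue_state :: "nat \<Rightarrow> nat set \<Rightarrow> nat \<Rightarrow> enat list \<Rightarrow>
    (nat \<Rightarrow> enat) \<times> (nat \<Rightarrow> enat)" where
  "queue_state n T i x =
     foldl (\<lambda>st j. qstep n T (psize x i j) j st) (\<lambda>_. \<infinity>, \<lambda>_. \<infinity>) (entry_order n x i)"

definition queue_out :: "nat \<Rightarrow> nat set \<Rightarrow> nat \<Rightarrow> enat list \<Rightarrow> enat list" where
  "queue_out n T i x = map (\<lambda>p. if p \<in> T then fst (queue_state n T i x) p else \<infinity>) [0..<n]"

(* weight of q with respect to x: prod over non-terminal sites of t_(size of first visitor),
   i.e. prod_s t_s^alpha_s *)
definition queue_weight :: "nat \<Rightarrow> nat set \<Rightarrow> nat \<Rightarrow> enat list \<Rightarrow> (nat \<Rightarrow> 'a::comm_monoid_mult) \<Rightarrow> 'a" where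
  "queue_weight n T i x t =
     (\<Prod>p\<in>{p. p < n \<and> p \<notin> T}. t (the_enat (snd (queue_state n T i x) p)))"

(* Ts = [T_1,...,T_r] (terminal sets of the rows) is a multi-line queue of type m *)
definition is_mlq :: "nat \<Rightarrow> nat list \<Rightarrow> nat set list \<Rightarrow> bool" where
  "is_mlq n m Ts \<longleftrightarrow> length m = length Ts \<and> (\<forall>k<length m. 0 < m ! k) \<and> sum_list m \<le> n \<and>
     (\<forall>i<length Ts. Ts ! i \<subseteq> {..<n} \<and> card (Ts ! i) = sum_list (take (Suc i) m))"

(* word after the first k rows: (q_k o ... o q_1)(\<infinity>...\<infinity>), row number i+1 for Ts!i *)
definition mlq_input :: "nat \<Rightarrow> nat set list \<Rightarrow> nat \<Rightarrow> enat list" where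
  "mlq_input n Ts k =
     foldl (\<lambda>x (i, T). queue_out n T i x) (replicate n \<infinity>) (zip [1..<Suc k] (take k Ts))"

definition mlq_word :: "nat \<Rightarrow> nat set list \<Rightarrow> enat list" where
  "mlq_word n Ts = mlq_input n Ts (length Ts)"

definition mlq_weight :: "nat \<Rightarrow> nat set list \<Rightarrow> (nat \<Rightarrow> 'a::comm_monoid_mult) \<Rightarrow> 'a" where
  "mlq_weight n Ts t = (\<Prod>i<length Ts. queue_weight n (Ts ! i) (Suc i) (mlq_input n Ts i) t)"

definition next_jump :: "enat list \<Rightarrow> nat \<Rightarrow> nat option" where
  "next_jump x j =
     (let n = length x;
          P = (\<lambda>d. 0 < d \<and> d < n \<and> x ! ((j + d) mod n) \<noteq> \<infinity> \<and> x ! ((j + d) mod n) > x ! j)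
      in if \<exists>d. P d then Some ((j + (LEAST d. P d)) mod n) else None)"

primrec jump_seq :: "enat list \<Rightarrow> nat \<Rightarrow> nat \<Rightarrow> nat option" where
  "jump_seq x j0 0 = Some j0"
| "jump_seq x j0 (Suc k) = Option.bind (jump_seq x j0 k) (next_jump x)"

definition jump :: "enat list \<Rightarrow> nat \<Rightarrow> enat list" where
  "jump x j0 = map (\<lambda>p. if p = j0 then \<infinity>
       else if \<exists>k. jump_seq x j0 (Suc k) = Some p
         then x ! the (jump_seq x j0 (SOME k. jump_seq x j0 (Suc k) = Some p))
         else x ! p) [0..<length x]"

end

theory Submission
  imports Defs
begin

text \<open>
  Let both queues of the last row act on the same input word, the particles entering in the same
  order, and record at each stage the partially filled output in which every still free terminal site
  carries a mark \<open>M\<close> exceeding all particle sizes. Since particles enter in increasing size, the entry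
  of a particle of size \<open>s\<close> writes \<open>s\<close> into the first mark cyclically to the right of its starting site.
  This operation commutes with the jumping operation from \<open>j0\<close>; so at every stage the marked word
  for \<open>T - {j0}\<close> is the jump from \<open>j0\<close> of the marked word for \<open>T\<close>, and at the end this is (a).

  For (b) the first visitors are compared along the same run. A particle travels further in the
  smaller queue only if its stopping site in the larger one lies on the jumping sequence of \<open>j0\<close>,
  and that sequence cannot pass a free terminal site. Until the particles of size \<open>r\<close> enter, the
  site that finally receives the first \<open>r\<close> right of \<open>j0\<close> is free, and by hypothesis all sites before it
  are terminal; so these detours visit no non-terminal site, while a detour of a particle of size \<open>r\<close>
  only anticipates a first visitor of the same size. Hence the weights differ only at \<open>j0\<close>,
  whose first visitor in the smaller queue is the particle that ends at \<open>j0\<close> in the larger one.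
\<close>

definition cyc_dist :: "nat \<Rightarrow> nat \<Rightarrow> nat \<Rightarrow> nat" where
  "cyc_dist n a p = (p + n - a) mod n"

lemma cyc_dist_less: "0 < n \<Longrightarrow> cyc_dist n a p < n"
  by (simp add: cyc_dist_def)

lemma mod_add_cyc_dist:
  assumes a: "a < n" "p < n"
  shows "(a + cyc_dist n a p) mod n = p"
proof -
  have "(a + cyc_dist n a p) mod n = (a + (p + n - a)) mod n" unfolding cyc_dist_def by (simp add: mod_add_right_eq)
  also have "a + (p + n - a) = p + n" using a by simp
  finally show ?thesis using a by simp
qed

lemma cyc_dist_add_mod:
  assumes a: "a < n" "d < n"
  shows "cyc_dist n a ((a + d) mod n) = d"
proof -
  have "cyc_dist n a ((a + d) mod n) = ((a + d) mod n + (n - a)) mod n" unfolding cyc_dist_def using a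
    by (metis Nat.add_diff_assoc less_imp_le_nat)
  also have "\<dots> = (a + d + (n - a)) mod n" by (simp add: mod_add_left_eq)
  also have "a + d + (n - a) = d + n" using a by simp
  finally show ?thesis using a by simp
qed

lemma cyc_dist_self: "a < n \<Longrightarrow> cyc_dist n a a = 0"
  by (simp add: cyc_dist_def)

lemma cyc_dist_inj: "a < n \<Longrightarrow> p < n \<Longrightarrow> q < n \<Longrightarrow> cyc_dist n a p = cyc_dist n a q \<Longrightarrow> p = q"
  by (metis mod_add_cyc_dist)

lemma cyc_dist_eq_0_iff: "a < n \<Longrightarrow> p < n \<Longrightarrow> cyc_dist n a p = 0 \<longleftrightarrow> p = a"
  by (metis cyc_dist_inj cyc_dist_self)

lemma cyc_dist_add_if_less:
  assumes "a < n" "b < n" "p < n" "cyc_dist n a b + cyc_dist n b p < n"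
  shows "cyc_dist n a p = cyc_dist n a b + cyc_dist n b p"
proof -
  have "(a + (cyc_dist n a b + cyc_dist n b p)) mod n = ((a + cyc_dist n a b) mod n + cyc_dist n b p) mod n"
    by (simp add: mod_add_left_eq add.assoc)
  also have "\<dots> = p" using assms by (simp add: mod_add_cyc_dist)
  finally have "p = (a + (cyc_dist n a b + cyc_dist n b p)) mod n" by simp
  then show ?thesis using cyc_dist_add_mod[OF assms(1) assms(4)] by simp
qed

lemma cyc_dist_add_if_le:
  assumes "a < n" "b < n" "p < n" "cyc_dist n a b \<le> cyc_dist n a p"
  shows "cyc_dist n a p = cyc_dist n a b + cyc_dist n b p"
proof -
  have n0: "0 < n" using assms by auto
  define e where "e = cyc_dist n a p - cyc_dist n a b"
  have e: "e < n" using cyc_dist_less[OF n0, of a p] e_def by auto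
  have "(b + e) mod n = ((a + cyc_dist n a b) mod n + e) mod n" using assms mod_add_cyc_dist by simp
  also have "\<dots> = (a + (cyc_dist n a b + e)) mod n" by (simp add: mod_add_left_eq add.assoc)
  also have "\<dots> = p" using assms e_def mod_add_cyc_dist by simp
  finally have "cyc_dist n b p = e" using cyc_dist_add_mod[OF assms(2) e] by simp
  then show ?thesis using e_def assms by simp
qed

definition first_from :: "nat \<Rightarrow> nat set \<Rightarrow> nat \<Rightarrow> nat option" where
  "first_from n S a = (if \<exists>p\<in>S. p < n
     then Some (THE p. p < n \<and> p \<in> S \<and> (\<forall>q\<in>S. q < n \<longrightarrow> cyc_dist n a p \<le> cyc_dist n a q)) else None)"

lemma first_from_ex1:
  assumes "a < n" "p0 \<in> S" "p0 < n"
  shows "\<exists>!p. p < n \<and> p \<in> S \<and> (\<forall>q\<in>S. q < n \<longrightarrow> cyc_dist n a p \<le> cyc_dist n a q)"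
proof -
  let ?D = "cyc_dist n a ` {p\<in>S. p < n}"
  have fin: "finite ?D" by simp
  have ne: "?D \<noteq> {}" using assms by auto
  obtain p where p: "p \<in> S" "p < n" "cyc_dist n a p = Min ?D"
    using Min_in[OF fin ne] by auto
  have "\<forall>q\<in>S. q < n \<longrightarrow> cyc_dist n a p \<le> cyc_dist n a q"
    using p fin by auto
  then have ex: "\<exists>p. p < n \<and> p \<in> S \<and> (\<forall>q\<in>S. q < n \<longrightarrow> cyc_dist n a p \<le> cyc_dist n a q)"
    using p by blast
  show ?thesis
  proof (rule ex_ex1I[OF ex])
    fix p q assume "p < n \<and> p \<in> S \<and> (\<forall>q\<in>S. q < n \<longrightarrow> cyc_dist n a p \<le> cyc_dist n a q)"
      "q < n \<and> q \<in> S \<and> (\<forall>qa\<in>S. qa < n \<longrightarrow> cyc_dist n a q \<le> cyc_dist n a qa)"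
    then have "cyc_dist n a p = cyc_dist n a q" "p < n" "q < n" by (auto intro: antisym)
    then show "p = q" using cyc_dist_inj assms(1) by blast
  qed
qed

lemma first_from_SomeD:
  assumes "first_from n S a = Some p" "a < n"
  shows "p < n \<and> p \<in> S \<and> (\<forall>q\<in>S. q < n \<longrightarrow> cyc_dist n a p \<le> cyc_dist n a q)"
proof -
  from assms(1) have ex: "\<exists>p\<in>S. p < n" by (auto simp: first_from_def split: if_splits)
  then obtain p0 where "p0 \<in> S" "p0 < n" by auto
  from first_from_ex1[OF assms(2) this] have e1: "\<exists>!p. p < n \<and> p \<in> S \<and> (\<forall>q\<in>S. q < n \<longrightarrow> cyc_dist n a p \<le> cyc_dist n a q)" .
  from assms(1) ex have "p = (THE p. p < n \<and> p \<in> S \<and> (\<forall>q\<in>S. q < n \<longrightarrow> cyc_dist n a p \<le> cyc_dist n a q))"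
    by (auto simp: first_from_def)
  then show ?thesis using theI'[OF e1] by simp
qed

lemma first_from_SomeI:
  assumes "a < n" "p < n" "p \<in> S" "\<forall>q\<in>S. q < n \<longrightarrow> cyc_dist n a p \<le> cyc_dist n a q"
  shows "first_from n S a = Some p"
proof -
  have ex: "\<exists>p\<in>S. p < n" using assms by auto
  from first_from_ex1[OF assms(1) assms(3) assms(2)] assms
  have "(THE p. p < n \<and> p \<in> S \<and> (\<forall>q\<in>S. q < n \<longrightarrow> cyc_dist n a p \<le> cyc_dist n a q)) = p"
    by (intro the1_equality) auto
  then show ?thesis using ex by (simp add: first_from_def)
qed

lemma first_from_None_iff: "first_from n S a = None \<longleftrightarrow> (\<forall>p\<in>S. \<not> p < n)"
  by (auto simp: first_from_def)

lemma first_from_skip: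
  assumes "a < n" "b < n" "\<forall>q\<in>S. q < n \<longrightarrow> cyc_dist n a b \<le> cyc_dist n a q"
  shows "first_from n S a = first_from n S b"
proof (cases "first_from n S a")
  case None
  then show ?thesis by (metis first_from_None_iff)
next
  case (Some p)
  from first_from_SomeD[OF Some assms(1)] have p: "p < n" "p \<in> S" "\<forall>q\<in>S. q < n \<longrightarrow> cyc_dist n a p \<le> cyc_dist n a q"
    by auto
  have "\<forall>q\<in>S. q < n \<longrightarrow> cyc_dist n b p \<le> cyc_dist n b q"
  proof (intro ballI impI)
    fix q assume q: "q \<in> S" "q < n"
    have "cyc_dist n a p = cyc_dist n a b + cyc_dist n b p" using cyc_dist_add_if_le assms p q by auto
    moreover have "cyc_dist n a q = cyc_dist n a b + cyc_dist n b q" using cyc_dist_add_if_le assms p q by auto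
    ultimately show "cyc_dist n b p \<le> cyc_dist n b q" using p q by fastforce
  qed
  then have "first_from n S b = Some p" using first_from_SomeI assms p by auto
  then show ?thesis using Some by simp
qed

lemma first_from_subset:
  assumes "a < n" "first_from n S a = Some p" "S' \<subseteq> S" "p \<in> S'"
  shows "first_from n S' a = Some p"
  using first_from_SomeD[OF assms(2,1)] assms by (intro first_from_SomeI) auto

lemma first_from_cong:
  assumes "\<forall>p<n. p \<in> S \<longleftrightarrow> p \<in> S'"
  shows "first_from n S a = first_from n S' a"
proof -
  have "(\<exists>p\<in>S. p < n) = (\<exists>p\<in>S'. p < n)" using assms by auto
  moreover have "(\<lambda>p. p < n \<and> p \<in> S \<and> (\<forall>q\<in>S. q < n \<longrightarrow> cyc_dist n a p \<le> cyc_dist n a q)) =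
     (\<lambda>p. p < n \<and> p \<in> S' \<and> (\<forall>q\<in>S'. q < n \<longrightarrow> cyc_dist n a p \<le> cyc_dist n a q))"
    using assms by (intro ext) auto
  ultimately show ?thesis unfolding first_from_def by simp
qed

definition larger_sites :: "enat list \<Rightarrow> nat \<Rightarrow> nat set" where
  "larger_sites x j = {q. x ! q \<noteq> \<infinity> \<and> x ! j < x ! q}"

lemma next_jump_eq_first_from:
  assumes "j < length x"
  shows "next_jump x j = first_from (length x) (larger_sites x j) j"
proof -
  define n where "n = length x"
  define P where "P = (\<lambda>d. 0 < d \<and> d < n \<and> x ! ((j + d) mod n) \<noteq> \<infinity> \<and> x ! ((j + d) mod n) > x ! j)"
  have nj: "next_jump x j = (if \<exists>d. P d then Some ((j + (LEAST d. P d)) mod n) else None)"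
    unfolding next_jump_def P_def n_def Let_def by simp
  have jn: "j < n" using assms n_def by simp
  have P_dist: "P (cyc_dist n j q)" if q: "q \<in> larger_sites x j" "q < n" for q
  proof -
    have "q \<noteq> j" using q by (auto simp: larger_sites_def)
    then show ?thesis unfolding P_def
      using q mod_add_cyc_dist[OF jn q(2)] cyc_dist_eq_0_iff[OF jn q(2)] cyc_dist_less[of n j q] jn
      by (auto simp: larger_sites_def)
  qed
  show ?thesis
  proof (cases "\<exists>d. P d")
    case True
    define d0 where "d0 = (LEAST d. P d)"
    have Pd0: "P d0" using LeastI_ex[OF True] d0_def by simp
    have "first_from n (larger_sites x j) j = Some ((j + d0) mod n)"
    proof (rule first_from_SomeI[OF jn])
      show "(j + d0) mod n < n" using jn by simp
      show "(j + d0) mod n \<in> larger_sites x j" using Pd0 by (simp add: P_def larger_sites_def)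
      show "\<forall>q\<in>larger_sites x j. q < n \<longrightarrow> cyc_dist n j ((j + d0) mod n) \<le> cyc_dist n j q"
      proof (intro ballI impI)
        fix q assume "q \<in> larger_sites x j" "q < n"
        then have "d0 \<le> cyc_dist n j q" unfolding d0_def by (intro Least_le P_dist)
        then show "cyc_dist n j ((j + d0) mod n) \<le> cyc_dist n j q" using cyc_dist_add_mod[OF jn] Pd0 P_def by simp
      qed
    qed
    then show ?thesis using nj True d0_def n_def by simp
  next
    case False
    then have "\<forall>q\<in>larger_sites x j. \<not> q < n" using P_dist by blast
    then show ?thesis using nj False first_from_None_iff n_def by metis
  qed
qed

lemma next_jump_SomeD:
  assumes "next_jump x j = Some q" "j < length x"
  shows "q < length x \<and> x ! q \<noteq> \<infinity> \<and> x ! j < x ! q"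
  using first_from_SomeD[OF assms(1)[unfolded next_jump_eq_first_from[OF assms(2)]] assms(2)]
  by (auto simp: larger_sites_def)

lemma jump_seq_less_length: "jump_seq x j k = Some c \<Longrightarrow> j < length x \<Longrightarrow> c < length x"
proof (induction k arbitrary: c)
  case 0 then show ?case by simp
next
  case (Suc k)
  then obtain c' where c': "jump_seq x j k = Some c'" "next_jump x c' = Some c"
    by (cases "jump_seq x j k") auto
  then show ?case using Suc next_jump_SomeD by blast
qed

lemma jump_seq_shift:
  assumes "next_jump x j0 = Some j1"
  shows "jump_seq x j0 (Suc k) = jump_seq x j1 k"
  by (induction k) (use assms in auto)

lemma jump_seq_SucE:
  assumes "jump_seq x j (Suc k) = Some c"
  obtains c' where "jump_seq x j k = Some c'" "next_jump x c' = Some c"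
  using assms by (cases "jump_seq x j k") auto

lemma jump_seq_values_mono:
  assumes "j < length x" "jump_seq x j b = Some c" "a \<le> b" "jump_seq x j a = Some p"
  shows "x ! p \<le> x ! c \<and> (a < b \<longrightarrow> x ! p < x ! c)"
  using assms(2,3,4)
proof (induction b arbitrary: c)
  case 0 then show ?case by simp
next
  case (Suc b)
  obtain c' where c': "jump_seq x j b = Some c'" "next_jump x c' = Some c"
    using jump_seq_SucE[OF Suc.prems(1)] by blast
  have c'l: "c' < length x" using jump_seq_less_length[OF c'(1) assms(1)] .
  have lt: "x ! c' < x ! c" using next_jump_SomeD[OF c'(2) c'l] by simp
  show ?case
  proof (cases "a = Suc b")
    case True then show ?thesis using Suc.prems by simp
  next
    case False
    then have "a \<le> b" using Suc.prems by simp
    then have "x ! p \<le> x ! c'" using Suc.IH[OF c'(1) _ Suc.prems(3)] by simp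
    then show ?thesis using lt by (meson le_less_trans less_imp_le)
  qed
qed

lemma jump_seq_value_inj:
  assumes "j < length x" "jump_seq x j a = Some p" "jump_seq x j b = Some q" "x ! p = x ! q"
  shows "a = b"
proof (rule ccontr)
  assume "a \<noteq> b"
  then consider "a < b" | "b < a" by linarith
  then show False
  proof cases
    case 1 then show False using jump_seq_values_mono[OF assms(1) assms(3) _ assms(2)] assms(4) by simp
  next
    case 2 then show False using jump_seq_values_mono[OF assms(1) assms(2) _ assms(3)] assms(4) by simp
  qed
qed

lemma jump_seq_inj:
  assumes "j < length x" "jump_seq x j a = Some p" "jump_seq x j b = Some p"
  shows "a = b"
  using jump_seq_value_inj[OF assms] by simp

lemma length_jump[simp]: "length (jump x j0) = length x"
  by (simp add: jump_def)

lemma nth_jump: "p < length x \<Longrightarrow> jump x j0 ! p = (if p = j0 then \<infinity>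
       else if \<exists>k. jump_seq x j0 (Suc k) = Some p
         then x ! the (jump_seq x j0 (SOME k. jump_seq x j0 (Suc k) = Some p))
         else x ! p)"
  by (simp add: jump_def)

lemma nth_jump_start: "j0 < length x \<Longrightarrow> jump x j0 ! j0 = \<infinity>"
  by (simp add: nth_jump)

lemma nth_jump_on_seq:
  assumes "j0 < length x" "jump_seq x j0 (Suc k) = Some p"
  shows "jump x j0 ! p = x ! the (jump_seq x j0 k)"
proof -
  have p: "p < length x" using jump_seq_less_length[OF assms(2,1)] .
  have "x ! j0 < x ! p" using jump_seq_values_mono[OF assms(1,2), of 0 j0] by simp
  then have "p \<noteq> j0" by auto
  moreover have "(SOME k'. jump_seq x j0 (Suc k') = Some p) = k"
    using jump_seq_inj[OF assms(1) _ assms(2)] assms(2) by (intro some_equality) blast+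
  ultimately show ?thesis using p assms(2) by (auto simp: nth_jump simp del: jump_seq.simps)
qed

lemma nth_jump_off_seq:
  assumes "p < length x" "p \<noteq> j0" "\<nexists>k. jump_seq x j0 (Suc k) = Some p"
  shows "jump x j0 ! p = x ! p"
  using assms by (simp add: nth_jump)

lemma jump_no_next:
  assumes "j0 < length x" "next_jump x j0 = None"
  shows "jump x j0 = x[j0 := \<infinity>]"
proof -
  have "jump_seq x j0 (Suc k) = None" for k
    by (induction k) (use assms in auto)
  then show ?thesis by (intro nth_equalityI) (auto simp: nth_jump nth_list_update)
qed

lemma jump_next:
  assumes "j0 < length x" "next_jump x j0 = Some j1"
  shows "jump x j0 = (jump x j1)[j1 := x ! j0, j0 := \<infinity>]"
proof (rule nth_equalityI)
  fix p assume "p < length (jump x j0)"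
  then have p: "p < length x" by simp
  have j1: "j1 < length x" "x ! j0 < x ! j1" using next_jump_SomeD[OF assms(2,1)] by auto
  have seq: "jump_seq x j0 (Suc k) = jump_seq x j1 k" for k
    using jump_seq_shift[OF assms(2)] .
  consider "p = j0" | "p = j1" | (on) k where "p \<noteq> j0" "p \<noteq> j1" "jump_seq x j1 (Suc k) = Some p"
    | (off) "p \<noteq> j0" "p \<noteq> j1" "\<nexists>k. jump_seq x j1 (Suc k) = Some p"
    by blast
  then show "jump x j0 ! p = (jump x j1)[j1 := x ! j0, j0 := \<infinity>] ! p"
  proof cases
    case 1 then show ?thesis using p by (simp add: nth_jump_start)
  next
    case 2
    moreover have "j1 \<noteq> j0" using j1 by auto
    ultimately show ?thesis using nth_jump_on_seq[OF assms(1), of 0 j1] assms j1 by simp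
  next
    case on
    have "jump_seq x j0 (Suc (Suc k)) = Some p" by (metis seq on(3))
    then have "jump x j0 ! p = x ! the (jump_seq x j0 (Suc k))" by (rule nth_jump_on_seq[OF assms(1)])
    also have "\<dots> = jump x j1 ! p" by (metis seq nth_jump_on_seq[OF j1(1) on(3)])
    finally show ?thesis using on by simp
  next
    case off
    moreover have "\<nexists>k. jump_seq x j0 (Suc k) = Some p"
      using off seq by (metis jump_seq.simps(1) not0_implies_Suc option.inject)
    ultimately show ?thesis using p by (simp add: nth_jump_off_seq)
  qed
qed simp

lemma jump_changed_imp_on_seq:
  assumes "p < length x" "jump x j0 ! p \<noteq> x ! p"
  shows "\<exists>k. jump_seq x j0 k = Some p"
proof (cases "p = j0")
  case True then show ?thesis by (metis jump_seq.simps(1))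
next
  case False then show ?thesis using assms nth_jump_off_seq by blast
qed

lemma nth_jump_less:
  assumes "j0 < length x" "p < length x" "p \<noteq> j0" "jump x j0 ! p \<noteq> x ! p"
  shows "jump x j0 ! p < x ! p \<and> x ! p \<noteq> \<infinity>"
proof -
  obtain k where k: "jump_seq x j0 (Suc k) = Some p"
    using assms nth_jump_off_seq by blast
  obtain c where c: "jump_seq x j0 k = Some c" "next_jump x c = Some p"
    using jump_seq_SucE[OF k] .
  have "x ! c < x ! p \<and> x ! p \<noteq> \<infinity>"
    using next_jump_SomeD[OF c(2) jump_seq_less_length[OF c(1) assms(1)]] by simp
  then show ?thesis using nth_jump_on_seq[OF assms(1) k] c(1) by simp
qed

lemma next_jump_at_max:
  assumes "g < length x" "\<forall>p<length x. x ! p \<noteq> \<infinity> \<longrightarrow> x ! p \<le> x ! g"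
  shows "next_jump x g = None"
proof -
  have "\<forall>q\<in>larger_sites x g. \<not> q < length x"
    using assms by (auto simp: larger_sites_def leD)
  then show ?thesis using next_jump_eq_first_from[OF assms(1)] first_from_None_iff by metis
qed

text \<open>In a marked word the free terminal sites carry the mark \<open>M\<close>, and the particles placed so far have
  size at most \<open>s < M\<close>.\<close>

definition marked :: "nat \<Rightarrow> nat \<Rightarrow> enat list \<Rightarrow> bool" where
  "marked M s w \<longleftrightarrow> (\<forall>p<length w. w ! p = \<infinity> \<or> w ! p = enat M \<or> (\<exists>v. w ! p = enat v \<and> v \<le> s))"

definition marks :: "nat \<Rightarrow> enat list \<Rightarrow> nat set" where
  "marks M w = {p. p < length w \<and> w ! p = enat M}"

definition fill_mark :: "nat \<Rightarrow> nat \<Rightarrow> nat \<Rightarrow> enat list \<Rightarrow> enat list" where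
  "fill_mark M s j w =
     (case first_from (length w) (marks M w) j of None \<Rightarrow> w | Some f \<Rightarrow> w[f := enat s])"

lemma length_fill_mark[simp]: "length (fill_mark M s j w) = length w"
  by (simp add: fill_mark_def split: option.split)

lemma marks_update: "a < length w \<Longrightarrow> v \<noteq> enat M \<Longrightarrow> marks M (w[a := v]) = marks M w - {a}"
  by (auto simp: marks_def nth_list_update)

lemma marked_update: "marked M s w \<Longrightarrow> v = \<infinity> \<or> v = enat M \<or> (\<exists>v'. v = enat v' \<and> v' \<le> s) \<Longrightarrow> marked M s (w[f := v])"
  unfolding marked_def
  by (metis length_list_update nth_list_update_eq nth_list_update_neq)

lemma marked_le: "marked M s w \<Longrightarrow> s < M \<Longrightarrow> p < length w \<Longrightarrow> w ! p \<le> enat M \<or> w ! p = \<infinity>"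
  unfolding marked_def by force

lemma nth_fill_mark_other:
  assumes "j < length w" "w ! p \<noteq> enat M"
  shows "fill_mark M s j w ! p = w ! p"
proof (cases "first_from (length w) (marks M w) j")
  case (Some f)
  then have "f \<noteq> p" using first_from_SomeD[OF Some assms(1)] assms(2) by (auto simp: marks_def)
  then show ?thesis using Some by (simp add: fill_mark_def)
qed (simp add: fill_mark_def)

lemma fill_mark_update_commute:
  assumes "j < length y" "a < length y" "y ! a \<noteq> enat M" "v \<noteq> enat M"
  shows "fill_mark M s j (y[a := v]) = (fill_mark M s j y)[a := v]"
proof -
  have marks: "marks M (y[a := v]) = marks M y"
    using marks_update[OF assms(2,4)] assms(3) by (auto simp: marks_def)
  show ?thesis
  proof (cases "first_from (length y) (marks M y) j")
    case (Some g)
    then have "g \<noteq> a" using first_from_SomeD[OF Some assms(1)] assms(3) by (auto simp: marks_def)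
    then show ?thesis using Some marks by (simp add: fill_mark_def list_update_swap)
  qed (use marks in \<open>simp add: fill_mark_def\<close>)
qed

lemma next_jump_at_mark:
  assumes "marked M s w" "s < M" "g < length w" "w ! g = enat M"
  shows "next_jump w g = None"
  by (intro next_jump_at_max[OF assms(3)]) (use marked_le[OF assms(1,2)] assms(4) in fastforce)

lemma jump_mark_imp_mark:
  assumes "marked M s w" "s < M" "j0 < length w" "p < length w" "jump w j0 ! p = enat M"
  shows "w ! p = enat M"
proof (rule ccontr)
  assume ne: "w ! p \<noteq> enat M"
  have "p \<noteq> j0" using assms(5) nth_jump_start[OF assms(3)] by auto
  then have "enat M < w ! p" "w ! p \<noteq> \<infinity>" using nth_jump_less[OF assms(3,4)] ne assms(5) by auto
  then show False using marked_le[OF assms(1,2,4)] by auto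
qed

lemma jump_from_top_value:
  assumes "marked M s u" "s < M" "a < length u" "u ! a = enat s"
  shows "jump u a = (case first_from (length u) (marks M u) a of
                       None \<Rightarrow> u[a := \<infinity>] | Some g \<Rightarrow> u[g := enat s, a := \<infinity>])"
proof -
  have "\<forall>p<length u. p \<in> larger_sites u a \<longleftrightarrow> p \<in> marks M u"
    using assms unfolding larger_sites_def marks_def marked_def by fastforce
  then have next_u: "next_jump u a = first_from (length u) (marks M u) a"
    using next_jump_eq_first_from[OF assms(3)] first_from_cong by metis
  show ?thesis
  proof (cases "first_from (length u) (marks M u) a")
    case None then show ?thesis using jump_no_next[OF assms(3)] next_u by simp
  next
    case (Some g)
    have g: "g < length u" "u ! g = enat M" using first_from_SomeD[OF Some assms(3)] by (auto simp: marks_def)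
    have "jump u g = u[g := \<infinity>]" using jump_no_next[OF g(1) next_jump_at_mark[OF assms(1,2) g]] .
    then show ?thesis using jump_next[OF assms(3)] next_u Some assms(4) by simp
  qed
qed

context
  fixes M s n j :: nat and w :: "enat list"
  assumes s_less_M: "s < M" and marked_w: "marked M s w" and length_w: "length w = n"
    and j_less_n: "j < n"
begin

lemma marks_subset_larger_sites: "w ! j0 = enat v \<Longrightarrow> v \<le> s \<Longrightarrow> marks M w \<subseteq> larger_sites w j0"
  using s_less_M by (auto simp: marks_def larger_sites_def)

lemma jump_fill_mark_at_mark:
  assumes "j0 < n" "w ! j0 = enat M"
  shows "jump (fill_mark M s j w) j0 = fill_mark M s j (jump w j0)"
proof -
  have jw: "jump w j0 = w[j0 := \<infinity>]"
    using jump_no_next next_jump_at_mark[OF marked_w s_less_M] assms length_w by simp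
  have marks_jw: "marks M (w[j0 := \<infinity>]) = marks M w - {j0}" using marks_update assms length_w by simp
  have "j0 \<in> marks M w" using assms length_w by (simp add: marks_def)
  then obtain f where F: "first_from n (marks M w) j = Some f"
    using first_from_None_iff[of n "marks M w" j] assms(1) by (cases "first_from n (marks M w) j") auto
  have f: "f < n" "f \<in> marks M w" "\<forall>q\<in>marks M w. q < n \<longrightarrow> cyc_dist n j f \<le> cyc_dist n j q"
    using first_from_SomeD[OF F j_less_n] by auto
  define u where "u = w[f := enat s]"
  have fill: "fill_mark M s j w = u" using F u_def length_w by (simp add: fill_mark_def)
  have u: "marked M s u" "length u = n" using marked_update[OF marked_w] length_w by (simp_all add: u_def)
  show ?thesis
  proof (cases "f = j0")
    case True
    have marks_u: "marks M u = marks M w - {j0}"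
      using marks_update[of j0 w "enat s"] True f length_w s_less_M by (simp add: u_def)
    have skip: "first_from n (marks M w - {j0}) j = first_from n (marks M w - {j0}) j0"
      using first_from_skip[OF j_less_n assms(1)] f True by auto
    have "u ! j0 = enat s" using True f u_def length_w by simp
    then have jump_u: "jump u j0 = (case first_from n (marks M w - {j0}) j0 of
                       None \<Rightarrow> u[j0 := \<infinity>] | Some g \<Rightarrow> u[g := enat s, j0 := \<infinity>])"
      using jump_from_top_value[OF u(1) s_less_M, of j0] u(2) marks_u assms(1) by simp
    have fill_jw: "fill_mark M s j (jump w j0) = (case first_from n (marks M w - {j0}) j0 of
                       None \<Rightarrow> w[j0 := \<infinity>] | Some g \<Rightarrow> w[j0 := \<infinity>, g := enat s])"
      using jw marks_jw skip length_w by (simp add: fill_mark_def)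
    show ?thesis
    proof (cases "first_from n (marks M w - {j0}) j0")
      case None then show ?thesis using jump_u fill_jw fill by (simp add: u_def True)
    next
      case (Some g)
      then have "g \<noteq> j0" using first_from_SomeD[OF Some assms(1)] by blast
      then have "u[g := enat s, j0 := \<infinity>] = w[j0 := \<infinity>, g := enat s]"
        by (simp add: u_def True list_update_swap[of j0 g])
      then show ?thesis using jump_u fill_jw fill Some by simp
    qed
  next
    case False
    have "u ! j0 = enat M" using u_def False assms(2) by simp
    then have jump_u: "jump u j0 = u[j0 := \<infinity>]"
      using jump_no_next next_jump_at_mark[OF u(1) s_less_M] assms(1) u(2) by simp
    have "first_from n (marks M w - {j0}) j = Some f"
      using first_from_subset[OF j_less_n F] False f by auto
    then have "fill_mark M s j (jump w j0) = w[j0 := \<infinity>, f := enat s]"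
      using jw marks_jw length_w by (simp add: fill_mark_def)
    moreover have "w[f := enat s, j0 := \<infinity>] = w[j0 := \<infinity>, f := enat s]"
      using False by (rule list_update_swap)
    ultimately show ?thesis using fill jump_u u_def by simp
  qed
qed

lemma jump_fill_mark_no_next:
  assumes "j0 < n" "w ! j0 = enat v" "v \<le> s" "next_jump w j0 = None"
  shows "jump (fill_mark M s j w) j0 = fill_mark M s j (jump w j0)"
proof -
  have jw: "jump w j0 = w[j0 := \<infinity>]" using jump_no_next assms length_w by simp
  have "\<forall>q\<in>larger_sites w j0. \<not> q < n"
    using assms next_jump_eq_first_from[of j0 w] length_w first_from_None_iff by metis
  then have "\<forall>q\<in>marks M w. \<not> q < n" using marks_subset_larger_sites[OF assms(2,3)] by blast
  then have "first_from n (marks M w) j = None" "first_from n (marks M w - {j0}) j = None"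
    using first_from_None_iff by blast+
  moreover have "marks M (w[j0 := \<infinity>]) = marks M w - {j0}" using marks_update assms length_w by simp
  ultimately show ?thesis using jw length_w by (simp add: fill_mark_def)
qed

lemma jump_fill_mark_next_first:
  assumes "j0 < n" "w ! j0 = enat s" "next_jump w j0 = Some j1"
    and F: "first_from n (marks M w) j = Some j1"
  shows "jump (fill_mark M s j w) j0 = fill_mark M s j (jump w j0)"
proof -
  have j1: "j1 < n" "j1 \<in> marks M w" "\<forall>q\<in>marks M w. q < n \<longrightarrow> cyc_dist n j j1 \<le> cyc_dist n j q"
    using first_from_SomeD[OF F j_less_n] by auto
  have j1_first: "first_from n (larger_sites w j0) j0 = Some j1"
    using assms(3) next_jump_eq_first_from[of j0 w] assms(1) length_w by simp
  have j0_not_mark: "j0 \<notin> marks M w" using assms(2) s_less_M by (simp add: marks_def)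
  have "jump w j1 = w[j1 := \<infinity>]"
    using jump_no_next next_jump_at_mark[OF marked_w s_less_M] j1 length_w by (simp add: marks_def)
  then have jw: "jump w j0 = w[j1 := enat s, j0 := \<infinity>]"
    using jump_next[OF _ assms(3)] assms(1,2) length_w by simp
  define u where "u = w[j1 := enat s]"
  have fill: "fill_mark M s j w = u" using F u_def length_w by (simp add: fill_mark_def)
  have u: "marked M s u" "length u = n" using marked_update[OF marked_w] length_w by (simp_all add: u_def)
  have marks_u: "marks M u = marks M w - {j1}" "marks M (u[j0 := \<infinity>]) = marks M w - {j1}"
    using marks_update j1 j0_not_mark s_less_M assms(1) length_w by (auto simp: u_def)
  have "\<forall>q\<in>marks M w - {j1}. q < n \<longrightarrow> cyc_dist n j0 j1 \<le> cyc_dist n j0 q"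
    using first_from_SomeD[OF j1_first assms(1)] marks_subset_larger_sites[OF assms(2) order_refl]
    by blast
  then have "first_from n (marks M w - {j1}) j0 = first_from n (marks M w - {j1}) j1"
    by (rule first_from_skip[OF assms(1) j1(1)])
  moreover have "first_from n (marks M w - {j1}) j = first_from n (marks M w - {j1}) j1"
    using first_from_skip[OF j_less_n j1(1)] j1(3) by auto
  ultimately have skip: "first_from n (marks M u) j0 = first_from n (marks M (u[j0 := \<infinity>])) j"
    using marks_u by simp
  have "u ! j0 = enat s" using u_def assms(2) j1(1) length_w by (cases "j0 = j1") auto
  then have lhs: "jump u j0 = (case first_from n (marks M u) j0 of
                       None \<Rightarrow> u[j0 := \<infinity>] | Some g \<Rightarrow> u[g := enat s, j0 := \<infinity>])"
    using jump_from_top_value[OF u(1) s_less_M, of j0] u(2) assms(1) by simp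
  have "jump w j0 = u[j0 := \<infinity>]" using jw u_def by simp
  then have rhs: "fill_mark M s j (jump w j0) = (case first_from n (marks M u) j0 of
                       None \<Rightarrow> u[j0 := \<infinity>] | Some g \<Rightarrow> u[j0 := \<infinity>, g := enat s])"
    using skip u(2) by (simp add: fill_mark_def)
  show ?thesis
  proof (cases "first_from n (marks M u) j0")
    case None then show ?thesis using lhs rhs fill by simp
  next
    case (Some g)
    then have "g \<noteq> j0" using first_from_SomeD[OF Some assms(1)] marks_u j0_not_mark by auto
    then have "u[g := enat s, j0 := \<infinity>] = u[j0 := \<infinity>, g := enat s]" by (rule list_update_swap)
    then show ?thesis using lhs rhs fill Some by simp
  qed
qed

lemma next_jump_fill_mark:
  assumes "j0 < n" "w ! j0 = enat v" "v \<le> s" "next_jump w j0 = Some j1"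
    and not_first: "\<not> (first_from n (marks M w) j = Some j1 \<and> v = s)"
  shows "next_jump (fill_mark M s j w) j0 = Some j1"
proof (cases "first_from n (marks M w) j")
  case None then show ?thesis using assms length_w by (simp add: fill_mark_def)
next
  case (Some f)
  have f: "f < n" "w ! f = enat M" using first_from_SomeD[OF Some j_less_n] by (auto simp: marks_def)
  have j1: "j1 < n" "w ! j1 \<noteq> \<infinity>" "w ! j0 < w ! j1"
    using next_jump_SomeD[OF assms(4)] assms(1) length_w by auto
  have j1_first: "first_from n (larger_sites w j0) j0 = Some j1"
    using assms(4) next_jump_eq_first_from[of j0 w] assms(1) length_w by simp
  define u where "u = w[f := enat s]"
  have fill: "fill_mark M s j w = u" using Some u_def length_w by (simp add: fill_mark_def)
  have u_j0: "u ! j0 = enat v" using u_def f assms(2,3) s_less_M by (cases "f = j0") auto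
  have "first_from n (larger_sites u j0) j0 = Some j1"
  proof (cases "v < s")
    case True
    have "p \<in> larger_sites u j0 \<longleftrightarrow> p \<in> larger_sites w j0" for p
      using u_j0 assms(2) f True s_less_M length_w by (cases "p = f") (auto simp: larger_sites_def u_def)
    then show ?thesis using first_from_cong j1_first by metis
  next
    case False
    then have "f \<noteq> j1" using not_first Some assms(3) by auto
    then have "j1 \<in> larger_sites u j0" using u_j0 j1 assms(2) by (simp add: u_def larger_sites_def)
    moreover have "larger_sites u j0 \<subseteq> larger_sites w j0"
    proof
      fix q assume q: "q \<in> larger_sites u j0"
      then have "q \<noteq> f" using u_j0 f False assms(3) length_w by (auto simp: larger_sites_def u_def)
      then show "q \<in> larger_sites w j0" using q u_j0 assms(2) by (simp add: larger_sites_def u_def)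
    qed
    ultimately show ?thesis using first_from_subset[OF assms(1) j1_first] by simp
  qed
  then show ?thesis using fill next_jump_eq_first_from[of j0 u] assms(1) length_w by (simp add: u_def)
qed

lemma jump_fill_mark_next:
  assumes "j0 < n" "w ! j0 = enat v" "v \<le> s" "next_jump w j0 = Some j1"
    and not_first: "\<not> (first_from n (marks M w) j = Some j1 \<and> v = s)"
    and IH: "jump (fill_mark M s j w) j1 = fill_mark M s j (jump w j1)"
  shows "jump (fill_mark M s j w) j0 = fill_mark M s j (jump w j0)"
proof -
  have j1: "j1 < n" "j0 \<noteq> j1" using next_jump_SomeD[OF assms(4)] assms(1,2) length_w by auto
  define y where "y = jump w j1"
  have y: "length y = n" "y ! j1 = \<infinity>" using nth_jump_start j1 length_w by (simp_all add: y_def)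
  have "y ! j0 \<noteq> enat M"
    using jump_mark_imp_mark[OF marked_w s_less_M, of j1 j0] assms(1-3) s_less_M j1 length_w
    by (auto simp: y_def)
  then have commute: "fill_mark M s j (y[j1 := enat v, j0 := \<infinity>]) = (fill_mark M s j y)[j1 := enat v, j0 := \<infinity>]"
    using fill_mark_update_commute j_less_n y assms(1,3) s_less_M j1 by simp
  have "fill_mark M s j w ! j0 = enat v"
    using nth_fill_mark_other assms(2,3) s_less_M j_less_n length_w by simp
  then have "jump (fill_mark M s j w) j0 = (fill_mark M s j y)[j1 := enat v, j0 := \<infinity>]"
    using jump_next[OF _ next_jump_fill_mark[OF assms(1-5)]] assms(1) length_w IH by (simp add: y_def)
  also have "\<dots> = fill_mark M s j (jump w j0)"
    using commute jump_next[OF _ assms(4)] assms(1,2) length_w by (simp add: y_def)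
  finally show ?thesis .
qed

text \<open>The induction is along the jumping sequence, whose values strictly increase up to the mark \<open>M\<close>.\<close>

lemma jump_fill_mark:
  assumes "j0 < n" "w ! j0 \<noteq> \<infinity>"
  shows "jump (fill_mark M s j w) j0 = fill_mark M s j (jump w j0)"
  using assms
proof (induction j0 rule: measure_induct_rule[where f="\<lambda>j0. M - the_enat (w ! j0)"])
  case (less j0)
  consider "w ! j0 = enat M" | v where "w ! j0 = enat v" "v \<le> s"
    using marked_w less.prems length_w by (auto simp: marked_def)
  then show ?case
  proof cases
    case 1 then show ?thesis using jump_fill_mark_at_mark less.prems by blast
  next
    case (2 v)
    show ?thesis
    proof (cases "next_jump w j0")
      case None then show ?thesis using jump_fill_mark_no_next 2 less.prems by blast
    next
      case (Some j1)
      show ?thesis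
      proof (cases "first_from n (marks M w) j = Some j1 \<and> v = s")
        case True then show ?thesis using jump_fill_mark_next_first 2 Some less.prems by blast
      next
        case False
        have j1: "j1 < n" "w ! j1 \<noteq> \<infinity>" "w ! j0 < w ! j1"
          using next_jump_SomeD[OF Some] less.prems length_w by auto
        moreover have "w ! j1 \<le> enat M" using marked_le[OF marked_w s_less_M, of j1] j1 length_w by auto
        ultimately have "M - the_enat (w ! j1) < M - the_enat (w ! j0)"
          using 2 by (cases "w ! j1") auto
        then have "jump (fill_mark M s j w) j1 = fill_mark M s j (jump w j1)" using less.IH j1 by blast
        then show ?thesis using jump_fill_mark_next 2 Some False less.prems by blast
      qed
    qed
  qed
qed

end

definition free_terminals :: "nat set \<Rightarrow> (nat \<Rightarrow> enat) \<Rightarrow> nat set" where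
  "free_terminals T occ = {p. p \<in> T \<and> occ p = \<infinity>}"

lemma free_dists_eq:
  assumes "j < n"
  shows "free_dists n T occ j = {d. d < n \<and> (j + d) mod n \<in> free_terminals T occ}"
  by (auto simp: free_dists_def free_terminals_def)

lemma free_dists_empty:
  assumes "j < n"
  shows "free_dists n T occ j = {} \<longleftrightarrow> first_from n (free_terminals T occ) j = None"
proof -
  have "free_dists n T occ j = {} \<longleftrightarrow> (\<forall>p\<in>free_terminals T occ. \<not> p < n)"
  proof
    assume e: "free_dists n T occ j = {}"
    show "\<forall>p\<in>free_terminals T occ. \<not> p < n"
    proof (intro ballI notI)
      fix p assume p: "p \<in> free_terminals T occ" "p < n"
      then have "cyc_dist n j p \<in> free_dists n T occ j"
        using mod_add_cyc_dist[OF assms p(2)] cyc_dist_less[of n j p] assms by (auto simp: free_dists_eq[OF assms])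
      then show False using e by simp
    qed
  next
    assume h: "\<forall>p\<in>free_terminals T occ. \<not> p < n"
    show "free_dists n T occ j = {}"
      using h assms by (auto simp: free_dists_eq[OF assms])
  qed
  then show ?thesis using first_from_None_iff by metis
qed

lemma free_dists_Min:
  assumes "j < n" "first_from n (free_terminals T occ) j = Some f"
  shows "Min (free_dists n T occ j) = cyc_dist n j f"
proof -
  have f: "f < n" "f \<in> free_terminals T occ" "\<forall>q\<in>free_terminals T occ. q < n \<longrightarrow> cyc_dist n j f \<le> cyc_dist n j q"
    using first_from_SomeD[OF assms(2,1)] by auto
  have fin: "finite (free_dists n T occ j)" by (simp add: free_dists_def)
  have mem: "cyc_dist n j f \<in> free_dists n T occ j"
    using f mod_add_cyc_dist[OF assms(1) f(1)] cyc_dist_less[of n j f] assms(1) by (auto simp: free_dists_eq[OF assms(1)])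
  have "\<forall>d\<in>free_dists n T occ j. cyc_dist n j f \<le> d"
  proof
    fix d assume d: "d \<in> free_dists n T occ j"
    then have "d < n" "(j + d) mod n \<in> free_terminals T occ" by (auto simp: free_dists_eq[OF assms(1)])
    then show "cyc_dist n j f \<le> d" using f(3) cyc_dist_add_mod[OF assms(1)] by (metis mod_less_divisor assms(1) gr_implies_not_zero neq0_conv)
  qed
  then show ?thesis using Min_eqI[OF fin] mem by (metis)
qed

lemma visit_iff:
  assumes "j < n" "l < n"
  shows "(\<exists>d\<le>l. p = (j + d) mod n) \<longleftrightarrow> p < n \<and> cyc_dist n j p \<le> l"
proof
  assume "\<exists>d\<le>l. p = (j + d) mod n"
  then obtain d where d: "d \<le> l" "p = (j + d) mod n" by auto
  then show "p < n \<and> cyc_dist n j p \<le> l" using cyc_dist_add_mod[OF assms(1), of d] assms by auto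
next
  assume "p < n \<and> cyc_dist n j p \<le> l"
  then show "\<exists>d\<le>l. p = (j + d) mod n" using mod_add_cyc_dist[OF assms(1)] by (metis)
qed

text \<open>A particle entering at \<open>j\<close> that stops at \<open>F\<close> (\<open>None\<close>: discarded after a full round) visits \<open>p\<close>.\<close>

definition visits :: "nat \<Rightarrow> nat \<Rightarrow> nat option \<Rightarrow> nat \<Rightarrow> bool" where
  "visits n j F p \<longleftrightarrow> p < n \<and> (case F of None \<Rightarrow> True | Some f \<Rightarrow> cyc_dist n j p \<le> cyc_dist n j f)"

lemma qstep_eq:
  assumes "j < n"
  shows "qstep n T s j st =
    (case first_from n (free_terminals T (fst st)) j of None \<Rightarrow> fst st | Some f \<Rightarrow> (fst st)(f := enat s),
     \<lambda>p. if snd st p = \<infinity> \<and> visits n j (first_from n (free_terminals T (fst st)) j) p then enat s else snd st p)"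
proof (cases "first_from n (free_terminals T (fst st)) j")
  case None
  then have e: "free_dists n T (fst st) j = {}" using free_dists_empty[OF assms] by simp
  have "\<And>p. (\<exists>d\<le>n - 1. p = (j + d) mod n) \<longleftrightarrow> p < n"
  proof -
    fix p
    have "cyc_dist n j p < n" using cyc_dist_less[of n j p] assms by simp
    then have "cyc_dist n j p \<le> n - 1" by simp
    then show "(\<exists>d\<le>n - 1. p = (j + d) mod n) \<longleftrightarrow> p < n"
      using visit_iff[OF assms, of "n - 1" p] assms by auto
  qed
  then show ?thesis using None e unfolding qstep_def Let_def visits_def by (auto simp: fun_eq_iff)
next
  case (Some f)
  then have e: "free_dists n T (fst st) j \<noteq> {}" using free_dists_empty[OF assms] by simp
  have mn: "Min (free_dists n T (fst st) j) = cyc_dist n j f" using free_dists_Min[OF assms Some] .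
  have f: "f < n" using first_from_SomeD[OF Some assms] by simp
  have jf: "(j + cyc_dist n j f) mod n = f" using mod_add_cyc_dist[OF assms f] .
  have "\<And>p. (\<exists>d\<le>cyc_dist n j f. p = (j + d) mod n) \<longleftrightarrow> p < n \<and> cyc_dist n j p \<le> cyc_dist n j f"
    using visit_iff[OF assms, of "cyc_dist n j f"] cyc_dist_less[of n j f] assms by auto
  then show ?thesis using Some e mn jf unfolding qstep_def Let_def visits_def by (auto simp: fun_eq_iff)
qed

type_synonym qstate = "(nat \<Rightarrow> enat) \<times> (nat \<Rightarrow> enat)"

definition run_queue :: "nat \<Rightarrow> nat set \<Rightarrow> (nat \<Rightarrow> nat) \<Rightarrow> qstate \<Rightarrow> nat list \<Rightarrow> qstate" where
  "run_queue n T sz st0 xs = foldl (\<lambda>st j. qstep n T (sz j) j st) st0 xs"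

definition empty_state :: qstate where "empty_state = (\<lambda>_. \<infinity>, \<lambda>_. \<infinity>)"

lemma queue_state_run: "queue_state n T i x = run_queue n T (psize x i) empty_state (entry_order n x i)"
  by (simp add: queue_state_def run_queue_def empty_state_def)

lemma run_queue_snoc: "run_queue n T sz st (xs @ [j]) = qstep n T (sz j) j (run_queue n T sz st xs)"
  by (simp add: run_queue_def)

lemma run_queue_append: "run_queue n T sz st (xs @ ys) = run_queue n T sz (run_queue n T sz st xs) ys"
  by (simp add: run_queue_def)

lemma run_queue_Nil: "run_queue n T sz st [] = st" by (simp add: run_queue_def)

lemma run_queue_take_Suc: "k < length xs \<Longrightarrow> run_queue n T sz st (take (Suc k) xs) = qstep n T (sz (xs ! k)) (xs ! k) (run_queue n T sz st (take k xs))"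
  by (simp add: take_Suc_conv_app_nth run_queue_snoc)

lemma qstep_fst_cases:
  assumes "j < n" "fst (qstep n T s j st) p \<noteq> \<infinity>"
  shows "(fst st p \<noteq> \<infinity> \<and> fst (qstep n T s j st) p = fst st p) \<or> (p \<in> T \<and> p < n \<and> fst (qstep n T s j st) p = enat s)"
proof (cases "first_from n (free_terminals T (fst st)) j")
  case None then show ?thesis using assms by (simp add: qstep_eq)
next
  case (Some f)
  have "f < n" "f \<in> T" using first_from_SomeD[OF Some assms(1)] by (auto simp: free_terminals_def)
  then show ?thesis using Some assms by (auto simp: qstep_eq)
qed

lemma qstep_fst_stable:
  assumes "j < n" "fst st p \<noteq> \<infinity>"
  shows "fst (qstep n T s j st) p = fst st p"
proof (cases "first_from n (free_terminals T (fst st)) j")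
  case None then show ?thesis using assms by (simp add: qstep_eq)
next
  case (Some f)
  have "f \<in> free_terminals T (fst st)" using first_from_SomeD[OF Some assms(1)] by auto
  then have "f \<noteq> p" using assms by (auto simp: free_terminals_def)
  then show ?thesis using Some assms by (simp add: qstep_eq)
qed

lemma qstep_snd_stable:
  assumes "j < n" "snd st p \<noteq> \<infinity>"
  shows "snd (qstep n T s j st) p = snd st p"
  using assms by (simp add: qstep_eq)

lemma qstep_snd_start:
  assumes "j < n"
  shows "snd (qstep n T s j st) j \<noteq> \<infinity>"
  using assms cyc_dist_self[OF assms] by (auto simp: qstep_eq visits_def split: option.splits)

lemma card_free_terminals_qstep:
  assumes "j < n" "T \<subseteq> {..<n}"
  shows "card (free_terminals T (fst (qstep n T s j st))) = card (free_terminals T (fst st)) - 1"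
proof (cases "first_from n (free_terminals T (fst st)) j")
  case None
  have "free_terminals T (fst (qstep n T s j st)) = free_terminals T (fst st)" using None assms by (simp add: qstep_eq)
  moreover have "free_terminals T (fst st) \<inter> {..<n} = {}" using None first_from_None_iff by auto
  moreover have "free_terminals T (fst st) \<subseteq> {..<n}" using assms(2) by (auto simp: free_terminals_def)
  ultimately have "free_terminals T (fst st) = {}" by blast
  then show ?thesis using \<open>free_terminals T (fst (qstep n T s j st)) = free_terminals T (fst st)\<close> by simp
next
  case (Some f)
  have f: "f \<in> free_terminals T (fst st)" using first_from_SomeD[OF Some assms(1)] by auto
  have "free_terminals T (fst (qstep n T s j st)) = free_terminals T (fst st) - {f}"
    using Some assms by (auto simp: qstep_eq free_terminals_def)
  moreover have "finite (free_terminals T (fst st))"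
    by (rule finite_subset[of _ "{..<n}"]) (use assms(2) in \<open>auto simp: free_terminals_def\<close>)
  ultimately show ?thesis using f by simp
qed

lemma run_fst_value:
  assumes "set xs \<subseteq> {..<n}" "fst (run_queue n T sz empty_state xs) p \<noteq> \<infinity>"
  shows "p \<in> T \<and> p < n \<and> (\<exists>j\<in>set xs. fst (run_queue n T sz empty_state xs) p = enat (sz j))"
  using assms
proof (induction xs arbitrary: p rule: rev_induct)
  case Nil then show ?case by (simp add: run_queue_Nil empty_state_def)
next
  case (snoc j xs)
  have j: "j < n" using snoc.prems by auto
  have r: "run_queue n T sz empty_state (xs @ [j]) = qstep n T (sz j) j (run_queue n T sz empty_state xs)" by (rule run_queue_snoc)
  from qstep_fst_cases[OF j snoc.prems(2)[unfolded r]]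
  show ?case
  proof
    assume h: "fst (run_queue n T sz empty_state xs) p \<noteq> \<infinity> \<and> fst (qstep n T (sz j) j (run_queue n T sz empty_state xs)) p = fst (run_queue n T sz empty_state xs) p"
    then show ?thesis using snoc.IH[of p] snoc.prems(1) r by auto
  next
    assume "p \<in> T \<and> p < n \<and> fst (qstep n T (sz j) j (run_queue n T sz empty_state xs)) p = enat (sz j)"
    then show ?thesis using r by auto
  qed
qed

lemma run_fst_stable:
  assumes "set xs \<subseteq> {..<n}" "fst st p \<noteq> \<infinity>"
  shows "fst (run_queue n T sz st xs) p = fst st p"
  using assms
proof (induction xs rule: rev_induct)
  case Nil then show ?case by (simp add: run_queue_Nil)
next
  case (snoc j xs)
  then show ?case using qstep_fst_stable[of j n "run_queue n T sz st xs" p T "sz j"] by (simp add: run_queue_snoc)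
qed

lemma run_snd_visited:
  assumes "set xs \<subseteq> {..<n}" "j \<in> set xs"
  shows "snd (run_queue n T sz st xs) j \<noteq> \<infinity>"
  using assms
proof (induction xs rule: rev_induct)
  case Nil then show ?case by simp
next
  case (snoc a xs)
  have a: "a < n" using snoc.prems by auto
  show ?case
  proof (cases "j \<in> set xs")
    case True
    then have "snd (run_queue n T sz st xs) j \<noteq> \<infinity>" using snoc by auto
    then show ?thesis using qstep_snd_stable[OF a] by (simp add: run_queue_snoc)
  next
    case False
    then have "j = a" using snoc.prems by auto
    then show ?thesis using qstep_snd_start[OF a] by (simp add: run_queue_snoc)
  qed
qed

lemma card_free_terminals_run:
  assumes "set xs \<subseteq> {..<n}" "T \<subseteq> {..<n}"
  shows "card (free_terminals T (fst (run_queue n T sz st xs))) = card (free_terminals T (fst st)) - length xs"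
  using assms(1)
proof (induction xs rule: rev_induct)
  case Nil then show ?case by (simp add: run_queue_Nil)
next
  case (snoc a xs)
  have a: "a < n" using snoc.prems by auto
  show ?case using card_free_terminals_qstep[OF a assms(2)] snoc by (simp add: run_queue_snoc)
qed

definition marked_occ :: "nat \<Rightarrow> nat \<Rightarrow> nat set \<Rightarrow> (nat \<Rightarrow> enat) \<Rightarrow> enat list" where
  "marked_occ n M T occ = map (\<lambda>p. if p \<in> T then (if occ p = \<infinity> then enat M else occ p) else \<infinity>) [0..<n]"

lemma length_marked_occ[simp]: "length (marked_occ n M T occ) = n" by (simp add: marked_occ_def)

lemma nth_marked_occ: "p < n \<Longrightarrow> marked_occ n M T occ ! p = (if p \<in> T then (if occ p = \<infinity> then enat M else occ p) else \<infinity>)"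
  by (simp add: marked_occ_def)

lemma marked_occ_qstep:
  assumes "j < n" "\<forall>p<n. p \<in> T \<longrightarrow> fst st p \<noteq> enat M"
  shows "marked_occ n M T (fst (qstep n T s j st)) = fill_mark M s j (marked_occ n M T (fst st))"
proof -
  have cong: "\<forall>p<n. p \<in> marks M (marked_occ n M T (fst st)) \<longleftrightarrow> p \<in> free_terminals T (fst st)"
    using assms(2) by (auto simp: nth_marked_occ free_terminals_def marks_def)
  have u: "fill_mark M s j (marked_occ n M T (fst st)) = (case first_from n (free_terminals T (fst st)) j of None \<Rightarrow> marked_occ n M T (fst st) | Some f \<Rightarrow> (marked_occ n M T (fst st))[f := enat s])"
    unfolding fill_mark_def using first_from_cong[OF cong] by simp
  show ?thesis
  proof (cases "first_from n (free_terminals T (fst st)) j")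
    case None then show ?thesis using u assms by (simp add: qstep_eq)
  next
    case (Some f)
    have f: "f < n" "f \<in> T" using first_from_SomeD[OF Some assms(1)] by (auto simp: free_terminals_def)
    have "marked_occ n M T ((fst st)(f := enat s)) = (marked_occ n M T (fst st))[f := enat s]"
      by (rule nth_equalityI) (use f in \<open>auto simp: nth_marked_occ nth_list_update\<close>)
    then show ?thesis using u Some assms by (simp add: qstep_eq)
  qed
qed

lemma sorted_take_le:
  assumes "j \<in> set (take k L)" "\<And>a b. a \<le> b \<Longrightarrow> b < length L \<Longrightarrow> sz (L ! a) \<le> sz (L ! b)" "k < length L"
  shows "sz j \<le> sz (L ! k)"
proof -
  obtain m where m: "m < length (take k L)" "take k L ! m = j" using assms(1) by (auto simp: in_set_conv_nth)
  then have "m < k" "L ! m = j" by auto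
  then show ?thesis using assms(2)[of m k] assms(3) by simp
qed

lemma run_snd_value:
  assumes "set xs \<subseteq> {..<n}" "snd (run_queue n T sz empty_state xs) p \<noteq> \<infinity>"
  shows "\<exists>j\<in>set xs. snd (run_queue n T sz empty_state xs) p = enat (sz j)"
  using assms
proof (induction xs arbitrary: p rule: rev_induct)
  case Nil then show ?case by (simp add: run_queue_Nil empty_state_def)
next
  case (snoc j xs)
  have j: "j < n" using snoc.prems by auto
  have r: "run_queue n T sz empty_state (xs @ [j]) = qstep n T (sz j) j (run_queue n T sz empty_state xs)" by (rule run_queue_snoc)
  show ?case
  proof (cases "snd (run_queue n T sz empty_state xs) p = \<infinity>")
    case True
    then show ?thesis using snoc.prems r j by (auto simp: qstep_eq split: if_splits)
  next
    case False
    then show ?thesis using snoc.IH[of p] snoc.prems r qstep_snd_stable[OF j False] by auto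
  qed
qed

lemma run_fst_take_stable:
  assumes "set L \<subseteq> {..<n}" "k \<le> length L" "fst (run_queue n T sz empty_state (take k L)) p \<noteq> \<infinity>"
  shows "fst (run_queue n T sz empty_state L) p = fst (run_queue n T sz empty_state (take k L)) p"
proof -
  have "run_queue n T sz empty_state L = run_queue n T sz (run_queue n T sz empty_state (take k L)) (drop k L)"
    using run_queue_append[of n T sz empty_state "take k L" "drop k L"] by simp
  moreover have "set (drop k L) \<subseteq> {..<n}" using assms(1) set_drop_subset by fastforce
  ultimately show ?thesis using run_fst_stable assms(3) by metis
qed

lemma visits_mono:
  assumes "j < n" "\<forall>p<n. p \<in> B \<longrightarrow> p \<in> A" "visits n j (first_from n A j) p"
  shows "visits n j (first_from n B j) p"
proof (cases "first_from n B j")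
  case None then show ?thesis using assms by (simp add: visits_def)
next
  case (Some g)
  have g: "g < n" "g \<in> A" using first_from_SomeD[OF Some assms(1)] assms(2) by auto
  then obtain f where f: "first_from n A j = Some f" using first_from_None_iff[of n A j] by (cases "first_from n A j") auto
  have "cyc_dist n j f \<le> cyc_dist n j g" using first_from_SomeD[OF f assms(1)] g by auto
  then show ?thesis using assms(3) f Some by (simp add: visits_def)
qed

lemma marks_marked_occ:
  assumes "T \<subseteq> {..<n}" "\<forall>p<n. p \<in> T \<longrightarrow> occ p \<noteq> enat M"
  shows "marks M (marked_occ n M T occ) = free_terminals T occ"
  using assms by (auto simp: marks_def nth_marked_occ free_terminals_def split: if_splits)

lemma jump_seq_before_mark:
  assumes "marked M s Z" "s < M" "j0 < length Z" "Z ! j0 \<noteq> \<infinity>" "q < length Z" "Z ! q = enat M"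
  shows "jump_seq Z j0 k = Some c \<Longrightarrow> c < length Z \<and> Z ! c \<noteq> \<infinity> \<and> cyc_dist (length Z) j0 c \<le> cyc_dist (length Z) j0 q"
proof (induction k arbitrary: c)
  case 0 then show ?case using assms cyc_dist_self by simp
next
  case (Suc k)
  define n where "n = length Z"
  obtain c' where c': "jump_seq Z j0 k = Some c'" "next_jump Z c' = Some c" using jump_seq_SucE[OF Suc.prems] by blast
  have IH: "c' < n" "Z ! c' \<noteq> \<infinity>" "cyc_dist n j0 c' \<le> cyc_dist n j0 q" using Suc.IH[OF c'(1)] n_def by auto
  have c: "c < n" "Z ! c \<noteq> \<infinity>" using next_jump_SomeD[OF c'(2)] IH n_def by auto
  have "Z ! c' \<noteq> enat M" using next_jump_at_mark[OF assms(1,2), of c'] c'(2) IH n_def by auto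
  then have "Z ! c' < enat M" using marked_le[OF assms(1,2), of c'] IH n_def by auto
  then have "q \<in> larger_sites Z c'" using assms(6) by (simp add: larger_sites_def)
  moreover have "first_from n (larger_sites Z c') c' = Some c"
    using c'(2) next_jump_eq_first_from[of c' Z] IH n_def by simp
  ultimately have c'_c: "cyc_dist n c' c \<le> cyc_dist n c' q" using first_from_SomeD IH(1) assms(5) n_def by blast
  have c'_q: "cyc_dist n j0 q = cyc_dist n j0 c' + cyc_dist n c' q"
    using cyc_dist_add_if_le[OF _ IH(1) _ IH(3)] assms n_def by simp
  moreover have "cyc_dist n j0 q < n" using cyc_dist_less[of n j0 q] assms(5) n_def by linarith
  ultimately have "cyc_dist n j0 c = cyc_dist n j0 c' + cyc_dist n c' c"
    using cyc_dist_add_if_less[OF _ IH(1) c(1)] c'_c assms n_def by simp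
  then show ?case using c c'_c c'_q n_def by simp
qed

lemma extra_visit_before_mark:
  assumes Z: "marked M s Z" "s < M" "length Z = n" and j: "j < n" and j0: "j0 < n" "Z ! j0 \<noteq> \<infinity>"
    and pr: "pr < n" "Z ! pr = enat M"
    and f: "first_from n (marks M Z) j = Some f" "f \<noteq> pr"
    and p: "p < n" "cyc_dist n j f < cyc_dist n j p" "visits n j (first_from n (marks M (jump Z j0)) j) p"
  shows "cyc_dist n j0 p \<le> cyc_dist n j0 pr"
proof -
  define Y where "Y = jump Z j0"
  have marks_Y: "marks M Y \<subseteq> marks M Z"
    using jump_mark_imp_mark[OF Z(1,2)] j0 Z(3) by (auto simp: marks_def Y_def)
  have f': "f < n" "Z ! f = enat M" "\<forall>q\<in>marks M Z. q < n \<longrightarrow> cyc_dist n j f \<le> cyc_dist n j q"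
    using first_from_SomeD[OF f(1) j] by (auto simp: marks_def)
  have "f \<notin> marks M Y"
  proof
    assume "f \<in> marks M Y"
    then have "first_from n (marks M Y) j = Some f" using first_from_subset[OF j f(1) marks_Y] by simp
    then show False using p by (simp add: visits_def Y_def)
  qed
  then obtain k1 where k1: "jump_seq Z j0 k1 = Some f"
    using jump_changed_imp_on_seq[of f Z j0] f' Z(3) by (auto simp: marks_def Y_def)
  have f_pr: "cyc_dist n j0 f \<le> cyc_dist n j0 pr"
    using jump_seq_before_mark[OF Z(1,2) _ j0(2) _ pr(2) k1] j0(1) pr(1) Z(3) by simp
  have "pr \<in> marks M Y"
  proof (rule ccontr)
    assume "pr \<notin> marks M Y"
    then obtain k2 where k2: "jump_seq Z j0 k2 = Some pr"
      using jump_changed_imp_on_seq[of pr Z j0] pr Z(3) by (auto simp: marks_def Y_def)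
    then have "k1 = k2" using jump_seq_value_inj[OF _ k1 k2] j0(1) Z(3) f'(2) pr(2) by simp
    then show False using k1 k2 f(2) by simp
  qed
  then obtain f2 where f2: "first_from n (marks M Y) j = Some f2"
    using first_from_None_iff[of n "marks M Y" j] pr(1) by (cases "first_from n (marks M Y) j") auto
  have "cyc_dist n j f2 \<le> cyc_dist n j pr"
    using first_from_SomeD[OF f2 j] \<open>pr \<in> marks M Y\<close> pr(1) by auto
  moreover have "cyc_dist n j p \<le> cyc_dist n j f2" using p(3) f2 by (simp add: visits_def Y_def)
  moreover have "cyc_dist n j p = cyc_dist n j f + cyc_dist n f p"
    using cyc_dist_add_if_le[OF j f'(1) p(1)] p(2) by simp
  moreover have "cyc_dist n j pr = cyc_dist n j f + cyc_dist n f pr"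
    using cyc_dist_add_if_le[OF j f'(1) pr(1)] f'(3) pr Z(3) by (simp add: marks_def)
  ultimately have f_p: "cyc_dist n f p \<le> cyc_dist n f pr" by simp
  have j0_pr: "cyc_dist n j0 pr = cyc_dist n j0 f + cyc_dist n f pr"
    using cyc_dist_add_if_le[OF j0(1) f'(1) pr(1)] f_pr by simp
  have "cyc_dist n j0 p = cyc_dist n j0 f + cyc_dist n f p"
    using cyc_dist_add_if_less[OF j0(1) f'(1) p(1)] f_p j0_pr cyc_dist_less[of n j0 pr] pr(1) by simp
  then show ?thesis using f_p j0_pr by simp
qed

lemma snd_qstep:
  "j < n \<Longrightarrow> snd (qstep n T s j st) p =
     (if snd st p = \<infinity> \<and> visits n j (first_from n (free_terminals T (fst st)) j) p then enat s else snd st p)"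
  by (simp add: qstep_eq)

lemma first_visitor_start_step:
  fixes n M s j j0 :: nat and T :: "nat set" and R R' :: qstate
  defines "Z \<equiv> marked_occ n M T (fst R)" and "Z' \<equiv> marked_occ n M T (fst (qstep n T s j R))"
  assumes j: "j < n" and j0: "j0 < n" "j0 \<in> T" and T: "T \<subseteq> {..<n}" and s: "s < M" "marked M s Z"
    and free_R: "\<forall>p<n. p \<in> T \<longrightarrow> fst R p \<noteq> enat M"
    and free_R': "\<forall>p<n. p \<in> T - {j0} \<longrightarrow> fst R' p \<noteq> enat M"
    and jump: "marked_occ n M (T - {j0}) (fst R') = jump Z j0"
    and start: "snd R' j0 = (if Z ! j0 = enat M then \<infinity> else Z ! j0)"
  shows "snd (qstep n (T - {j0}) s j R') j0 = (if Z' ! j0 = enat M then \<infinity> else Z' ! j0)"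
proof -
  have F: "free_terminals T (fst R) = marks M Z"
    using marks_marked_occ[OF T free_R] by (simp add: Z_def)
  have F': "free_terminals (T - {j0}) (fst R') = marks M (jump Z j0)"
    using marks_marked_occ[OF _ free_R'] T jump by auto
  have lenZ: "length Z = n" by (simp add: Z_def)
  have "marks M (jump Z j0) \<subseteq> marks M Z"
    using jump_mark_imp_mark[OF s(2,1)] j0 lenZ by (auto simp: marks_def)
  show ?thesis
  proof (cases "Z ! j0 = enat M")
    case True
    then have "j0 \<in> marks M Z" using j0 lenZ by (simp add: marks_def)
    then obtain f where f: "first_from n (marks M Z) j = Some f"
      using first_from_None_iff[of n "marks M Z" j] j0 by (cases "first_from n (marks M Z) j") auto
    have f': "f < n" "f \<in> marks M Z" "\<forall>q\<in>marks M Z. q < n \<longrightarrow> cyc_dist n j f \<le> cyc_dist n j q"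
      using first_from_SomeD[OF f j] by auto
    have fst_R: "fst (qstep n T s j R) = (fst R)(f := enat s)" using f F j by (simp add: qstep_eq)
    show ?thesis
    proof (cases "f = j0")
      case f_j0: True
      have "Z' ! j0 = enat s" using fst_R f_j0 j0 by (simp add: Z'_def nth_marked_occ)
      moreover have "visits n j (first_from n (marks M (jump Z j0)) j) j0"
      proof (cases "first_from n (marks M (jump Z j0)) j")
        case (Some g)
        then have "g \<in> marks M Z" "g < n"
          using first_from_SomeD[OF Some j] \<open>marks M (jump Z j0) \<subseteq> marks M Z\<close> by auto
        then show ?thesis using f' f_j0 Some j0 by (simp add: visits_def)
      qed (simp add: visits_def j0)
      ultimately show ?thesis using start True F' j s(1) by (simp add: snd_qstep)
    next
      case False
      have "fst R j0 = \<infinity>" using True free_R j0 by (auto simp: Z_def nth_marked_occ split: if_splits)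
      then have "Z' ! j0 = enat M" using fst_R False j0 by (simp add: Z'_def nth_marked_occ)
      moreover have "jump Z j0 = Z[j0 := \<infinity>]"
        using jump_no_next next_jump_at_mark[OF s(2,1)] True j0 lenZ by simp
      then have "first_from n (marks M (jump Z j0)) j = Some f"
        using first_from_subset[OF j f] f' False marks_update[of j0 Z \<infinity> M] j0 lenZ by auto
      moreover have "cyc_dist n j f < cyc_dist n j j0"
        using f' \<open>j0 \<in> marks M Z\<close> j0 cyc_dist_inj[OF j f'(1) j0(1)] False by fastforce
      ultimately show ?thesis using start True F' j by (simp add: snd_qstep visits_def)
    qed
  next
    case False
    then have "fst R j0 \<noteq> \<infinity>" using j0 by (auto simp: Z_def nth_marked_occ split: if_splits)
    then have "Z' ! j0 = Z ! j0" using qstep_fst_stable[OF j] j0 by (simp add: Z_def Z'_def nth_marked_occ)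
    moreover have "Z ! j0 \<noteq> \<infinity>" using j0 \<open>fst R j0 \<noteq> \<infinity>\<close> by (simp add: Z_def nth_marked_occ)
    ultimately show ?thesis using start False qstep_snd_stable[OF j] by simp
  qed
qed

lemma first_visitor_other_step:
  fixes n j :: nat and T T' :: "nat set" and R R' :: qstate
  defines "F \<equiv> first_from n (free_terminals T (fst R)) j"
    and "F' \<equiv> first_from n (free_terminals T' (fst R')) j"
  assumes j: "j < n" and "s \<le> r"
    and reach: "visits n j F p \<Longrightarrow> visits n j F' p"
    and extra: "s < r \<Longrightarrow> visits n j F' p \<Longrightarrow> visits n j F p"
    and bounded: "\<And>v. snd R' p = enat v \<Longrightarrow> v \<le> s"
    and rel: "snd R' p = snd R p \<or> (snd R p = \<infinity> \<and> snd R' p = enat r)"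
  shows "snd (qstep n T' s j R') p = snd (qstep n T s j R) p
    \<or> (snd (qstep n T s j R) p = \<infinity> \<and> snd (qstep n T' s j R') p = enat r)"
proof -
  have "s = r" if "snd R' p = enat r" using bounded[OF that] \<open>s \<le> r\<close> by simp
  moreover have "s = r" if "visits n j F' p" "\<not> visits n j F p"
    using extra that \<open>s \<le> r\<close> by fastforce
  ultimately show ?thesis using rel reach j by (auto simp: snd_qstep F_def[symmetric] F'_def[symmetric])
qed

context
  fixes n :: nat and L :: "nat list" and sz :: "nat \<Rightarrow> nat" and M :: nat
  assumes L_sub: "set L \<subseteq> {..<n}"
    and sz_mono: "\<And>a b. a \<le> b \<Longrightarrow> b < length L \<Longrightarrow> sz (L ! a) \<le> sz (L ! b)"
    and sz_less_M: "\<And>j. sz j < M"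
begin

abbreviation state :: "nat set \<Rightarrow> nat \<Rightarrow> qstate" where
  "state U k \<equiv> run_queue n U sz empty_state (take k L)"

lemma state_Suc: "k < length L \<Longrightarrow> state U (Suc k) = qstep n U (sz (L ! k)) (L ! k) (state U k)"
  by (rule run_queue_take_Suc)

lemma L_nth_less: "k < length L \<Longrightarrow> L ! k < n"
  using L_sub nth_mem by blast

lemma marked_occ_run:
  assumes "k < length L"
  shows "marked M (sz (L ! k)) (marked_occ n M U (fst (state U k)))
       \<and> (\<forall>p<n. p \<in> U \<longrightarrow> fst (state U k) p \<noteq> enat M)"
proof -
  have sub: "set (take k L) \<subseteq> {..<n}" using L_sub set_take_subset by fastforce
  have key: "\<exists>v. fst (state U k) p = enat v \<and> v \<le> sz (L ! k)" if occ: "fst (state U k) p \<noteq> \<infinity>" for p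
  proof -
    obtain j where j: "j \<in> set (take k L)" "fst (state U k) p = enat (sz j)"
      using run_fst_value[OF sub occ] by blast
    then show ?thesis using sorted_take_le[of j k L sz, OF j(1) sz_mono assms] by auto
  qed
  then have "fst (state U k) p \<noteq> enat M" for p using sz_less_M[of "L ! k"] by fastforce
  then show ?thesis using key by (auto simp: marked_def nth_marked_occ)
qed

lemma marked_occ_run_remove_terminal:
  assumes j0: "j0 < n" "j0 \<in> T" and "k \<le> length L"
  shows "marked_occ n M (T - {j0}) (fst (state (T - {j0}) k)) = jump (marked_occ n M T (fst (state T k))) j0"
  using assms(3)
proof (induction k)
  case 0
  define B where "B = marked_occ n M T (\<lambda>_. \<infinity>)"
  have "\<forall>p<length B. B ! p \<noteq> \<infinity> \<longrightarrow> B ! p \<le> B ! j0" by (simp add: B_def nth_marked_occ j0)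
  then have "jump B j0 = B[j0 := \<infinity>]" using jump_no_next next_jump_at_max j0 by (simp add: B_def)
  also have "\<dots> = marked_occ n M (T - {j0}) (\<lambda>_. \<infinity>)"
    by (rule nth_equalityI) (auto simp: B_def nth_marked_occ nth_list_update j0)
  finally show ?case by (simp add: B_def run_queue_Nil empty_state_def)
next
  case (Suc k)
  then have k: "k < length L" by simp
  define j where "j = L ! k"
  define s where "s = sz j"
  define T' where "T' = T - {j0}"
  have jn: "j < n" using L_nth_less[OF k] j_def by simp
  have v1: "marked M s (marked_occ n M T (fst (state T k)))" "\<forall>p<n. p \<in> T \<longrightarrow> fst (state T k) p \<noteq> enat M"
    using marked_occ_run[OF k] s_def j_def by auto
  have v2: "\<forall>p<n. p \<in> T' \<longrightarrow> fst (state T' k) p \<noteq> enat M"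
    using marked_occ_run[OF k] by auto
  have z0: "marked_occ n M T (fst (state T k)) ! j0 \<noteq> \<infinity>" using j0 by (simp add: nth_marked_occ)
  have "marked_occ n M T' (fst (state T' (Suc k))) = fill_mark M s j (marked_occ n M T' (fst (state T' k)))"
    using marked_occ_qstep[OF jn v2] state_Suc[OF k] s_def j_def by simp
  also have "\<dots> = fill_mark M s j (jump (marked_occ n M T (fst (state T k))) j0)" using Suc k T'_def by simp
  also have "\<dots> = jump (fill_mark M s j (marked_occ n M T (fst (state T k)))) j0"
    using jump_fill_mark[OF _ v1(1) length_marked_occ jn j0(1) z0] sz_less_M s_def by simp
  also have "\<dots> = jump (marked_occ n M T (fst (state T (Suc k)))) j0"
    using marked_occ_qstep[OF jn v1(2)] state_Suc[OF k] s_def j_def by simp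
  finally show ?case using T'_def by simp
qed

context
  fixes T :: "nat set" and j0 r d :: nat
  assumes j0: "j0 < n" "j0 \<in> T" and T_sub: "T \<subseteq> {..<n}"
    and sz_le_r: "\<And>j. sz j \<le> r" and d: "d < n"
    and target: "marked_occ n M T (fst (state T (length L))) ! ((j0 + d) mod n) = enat r"
    and before_target: "\<forall>d'<d. marked_occ n M T (fst (state T (length L))) ! ((j0 + d') mod n) \<noteq> \<infinity>"
begin

lemma terminal_before_target:
  assumes "p < n" "cyc_dist n j0 p \<le> d"
  shows "p \<in> T"
proof -
  have p: "p = (j0 + cyc_dist n j0 p) mod n" using mod_add_cyc_dist[OF j0(1) assms(1)] by simp
  have "marked_occ n M T (fst (state T (length L))) ! p \<noteq> \<infinity>"
  proof (cases "cyc_dist n j0 p < d")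
    case True
    then have "marked_occ n M T (fst (state T (length L))) ! ((j0 + cyc_dist n j0 p) mod n) \<noteq> \<infinity>"
      using before_target by blast
    then show ?thesis using p by simp
  next
    case False
    then have "cyc_dist n j0 p = d" using assms(2) by simp
    then show ?thesis using target p by simp
  qed
  then show ?thesis using assms(1) by (auto simp: nth_marked_occ split: if_splits)
qed

lemma target_free:
  assumes k: "k < length L" and small: "sz (L ! k) < r"
  shows "fst (state T k) ((j0 + d) mod n) = \<infinity>"
proof (rule ccontr)
  define pr where "pr = (j0 + d) mod n"
  assume occupied: "fst (state T k) pr \<noteq> \<infinity>"
  have pr: "pr < n" "pr \<in> T" using terminal_before_target cyc_dist_add_mod[OF j0(1) d] j0(1)
    by (auto simp: pr_def)
  have "fst (state T (length L)) pr = fst (state T k) pr"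
    using run_fst_take_stable[OF L_sub _ occupied] k by simp
  then have "marked_occ n M T (fst (state T (length L))) ! pr = fst (state T k) pr"
    using pr occupied by (simp add: nth_marked_occ)
  then have r: "fst (state T k) pr = enat r" using target by (simp add: pr_def)
  moreover have "marked_occ n M T (fst (state T k)) ! pr = fst (state T k) pr"
    using pr occupied by (simp add: nth_marked_occ)
  moreover have "marked M (sz (L ! k)) (marked_occ n M T (fst (state T k)))" "fst (state T k) pr \<noteq> enat M"
    using marked_occ_run[OF k] pr by auto
  ultimately show False using small pr unfolding marked_def by auto
qed

lemma target_not_first_free:
  assumes k: "k < length L" and small: "sz (L ! k) < r"
    and f: "first_from n (free_terminals T (fst (state T k))) (L ! k) = Some f"
  shows "f \<noteq> (j0 + d) mod n"
proof
  assume f_pr: "f = (j0 + d) mod n"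
  have fT: "f < n" "f \<in> T" using first_from_SomeD[OF f L_nth_less[OF k]] by (auto simp: free_terminals_def)
  have "fst (state T (Suc k)) f = enat (sz (L ! k))"
    using state_Suc[OF k] f L_nth_less[OF k] by (simp add: qstep_eq)
  then have "fst (state T (length L)) f = enat (sz (L ! k))"
    using run_fst_take_stable[OF L_sub, of "Suc k" T sz f] k by simp
  then show False using target f_pr fT small by (simp add: nth_marked_occ)
qed

lemma extra_visit_terminal:
  fixes k p :: nat
  defines "j \<equiv> L ! k"
  assumes k: "k < length L" and small: "sz j < r" and p: "p < n"
    and visits': "visits n j (first_from n (free_terminals (T - {j0}) (fst (state (T - {j0}) k))) j) p"
    and not_visits: "\<not> visits n j (first_from n (free_terminals T (fst (state T k))) j) p"
  shows "p \<in> T"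
proof -
  define Z where "Z = marked_occ n M T (fst (state T k))"
  define pr where "pr = (j0 + d) mod n"
  have j: "j < n" using L_nth_less[OF k] by (simp add: j_def)
  have v: "marked M (sz j) Z" "\<forall>p<n. p \<in> T \<longrightarrow> fst (state T k) p \<noteq> enat M"
    "\<forall>p<n. p \<in> T - {j0} \<longrightarrow> fst (state (T - {j0}) k) p \<noteq> enat M"
    using marked_occ_run[OF k] by (auto simp: Z_def j_def)
  have marks_Z: "free_terminals T (fst (state T k)) = marks M Z"
    using marks_marked_occ[OF T_sub v(2)] by (simp add: Z_def)
  have "free_terminals (T - {j0}) (fst (state (T - {j0}) k)) = marks M (jump Z j0)"
    using marks_marked_occ[OF _ v(3)] T_sub marked_occ_run_remove_terminal[OF j0 less_imp_le[OF k]]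
    by (auto simp: Z_def)
  then have visits_Y: "visits n j (first_from n (marks M (jump Z j0)) j) p" using visits' by simp
  obtain f where f: "first_from n (marks M Z) j = Some f"
    using not_visits p marks_Z by (cases "first_from n (marks M Z) j") (auto simp: visits_def)
  have f_p: "cyc_dist n j f < cyc_dist n j p" using not_visits p f marks_Z by (simp add: visits_def)
  have pr: "pr < n" "cyc_dist n j0 pr = d" "pr \<in> T"
    using cyc_dist_add_mod[OF j0(1) d] terminal_before_target j0(1) by (auto simp: pr_def)
  have Z_pr: "Z ! pr = enat M"
    using target_free[OF k small[unfolded j_def]] pr by (simp add: Z_def pr_def nth_marked_occ)
  have f_pr: "f \<noteq> pr" using target_not_first_free[OF k small[unfolded j_def]] f marks_Z
    by (simp add: j_def pr_def)
  have Z_j0: "Z ! j0 \<noteq> \<infinity>" using j0 by (simp add: Z_def nth_marked_occ)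
  have "cyc_dist n j0 p \<le> cyc_dist n j0 pr"
    by (rule extra_visit_before_mark[OF v(1) sz_less_M _ j j0(1) Z_j0 pr(1) Z_pr f f_pr p f_p visits_Y])
      (simp add: Z_def)
  then show ?thesis using terminal_before_target p pr(2) by simp
qed

lemma first_visitor_start_Suc:
  assumes k: "k < length L"
    and IH: "snd (state (T - {j0}) k) j0 = (if marked_occ n M T (fst (state T k)) ! j0 = enat M then \<infinity>
                                          else marked_occ n M T (fst (state T k)) ! j0)"
  shows "snd (state (T - {j0}) (Suc k)) j0 = (if marked_occ n M T (fst (state T (Suc k))) ! j0 = enat M then \<infinity>
                                          else marked_occ n M T (fst (state T (Suc k))) ! j0)"
proof -
  define j where "j = L ! k"
  define s where "s = sz j"
  have j: "j < n" using L_nth_less[OF k] by (simp add: j_def)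
  have v: "marked M s (marked_occ n M T (fst (state T k)))" "\<forall>p<n. p \<in> T \<longrightarrow> fst (state T k) p \<noteq> enat M"
    "\<forall>p<n. p \<in> T - {j0} \<longrightarrow> fst (state (T - {j0}) k) p \<noteq> enat M"
    using marked_occ_run[OF k] by (auto simp: s_def j_def)
  have "s < M" using sz_less_M by (simp add: s_def)
  have "snd (qstep n (T - {j0}) s j (state (T - {j0}) k)) j0
      = (if marked_occ n M T (fst (qstep n T s j (state T k))) ! j0 = enat M then \<infinity>
         else marked_occ n M T (fst (qstep n T s j (state T k))) ! j0)"
    by (rule first_visitor_start_step[OF j j0 T_sub \<open>s < M\<close> v
          marked_occ_run_remove_terminal[OF j0 less_imp_le[OF k]] IH])
  then show ?thesis using state_Suc[OF k] by (simp only: s_def j_def)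
qed

lemma first_visitor_other_Suc:
  assumes k: "k < length L" and p: "p < n" "p \<notin> T"
    and IH: "snd (state (T - {j0}) k) p = snd (state T k) p
        \<or> (snd (state T k) p = \<infinity> \<and> snd (state (T - {j0}) k) p = enat r)"
  shows "snd (state (T - {j0}) (Suc k)) p = snd (state T (Suc k)) p
        \<or> (snd (state T (Suc k)) p = \<infinity> \<and> snd (state (T - {j0}) (Suc k)) p = enat r)"
proof -
  define j where "j = L ! k"
  define s where "s = sz j"
  have j: "j < n" using L_nth_less[OF k] by (simp add: j_def)
  have v: "marked M s (marked_occ n M T (fst (state T k)))" "\<forall>p<n. p \<in> T \<longrightarrow> fst (state T k) p \<noteq> enat M"
    "\<forall>p<n. p \<in> T - {j0} \<longrightarrow> fst (state (T - {j0}) k) p \<noteq> enat M"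
    using marked_occ_run[OF k] by (auto simp: s_def j_def)
  have "s < M" "s \<le> r" using sz_less_M sz_le_r by (simp_all add: s_def)
  have "marks M (jump (marked_occ n M T (fst (state T k))) j0) \<subseteq> marks M (marked_occ n M T (fst (state T k)))"
    using jump_mark_imp_mark[OF v(1) \<open>s < M\<close>] j0(1) by (auto simp: marks_def)
  then have "free_terminals (T - {j0}) (fst (state (T - {j0}) k)) \<subseteq> free_terminals T (fst (state T k))"
    using marks_marked_occ[OF T_sub v(2)] marks_marked_occ[OF _ v(3)] T_sub
      marked_occ_run_remove_terminal[OF j0 less_imp_le[OF k]] by auto
  then have reach: "visits n j (first_from n (free_terminals T (fst (state T k))) j) p \<Longrightarrow>
      visits n j (first_from n (free_terminals (T - {j0}) (fst (state (T - {j0}) k))) j) p"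
    using visits_mono[OF j] by blast
  have extra: "visits n j (first_from n (free_terminals T (fst (state T k))) j) p"
    if "s < r" "visits n j (first_from n (free_terminals (T - {j0}) (fst (state (T - {j0}) k))) j) p"
    using extra_visit_terminal[OF k _ p(1), folded j_def] that p(2) s_def by blast
  have bounded: "v' \<le> s" if v': "snd (state (T - {j0}) k) p = enat v'" for v'
  proof -
    have sub: "set (take k L) \<subseteq> {..<n}" using L_sub set_take_subset by fastforce
    obtain j' where "j' \<in> set (take k L)" "snd (state (T - {j0}) k) p = enat (sz j')"
      using run_snd_value[OF sub] v' by fastforce
    then show ?thesis using sorted_take_le[of j' k L sz, OF _ sz_mono k] v' by (auto simp: s_def j_def)
  qed
  have "snd (qstep n (T - {j0}) s j (state (T - {j0}) k)) p = snd (qstep n T s j (state T k)) p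
      \<or> (snd (qstep n T s j (state T k)) p = \<infinity> \<and> snd (qstep n (T - {j0}) s j (state (T - {j0}) k)) p = enat r)"
    using first_visitor_other_step[OF j \<open>s \<le> r\<close> reach extra bounded] IH by blast
  then show ?thesis using state_Suc[OF k] by (simp only: s_def j_def)
qed

lemma first_visitor_run_remove_terminal:
  assumes "k \<le> length L"
  shows "snd (state (T - {j0}) k) j0 = (if marked_occ n M T (fst (state T k)) ! j0 = enat M then \<infinity>
                                       else marked_occ n M T (fst (state T k)) ! j0)
   \<and> (\<forall>p<n. p \<notin> T \<longrightarrow> snd (state (T - {j0}) k) p = snd (state T k) p
        \<or> (snd (state T k) p = \<infinity> \<and> snd (state (T - {j0}) k) p = enat r))"
  using assms
proof (induction k)
  case 0
  show ?case using j0 by (simp add: run_queue_Nil empty_state_def nth_marked_occ)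
next
  case (Suc k)
  then have "k < length L" by simp
  then show ?case using first_visitor_start_Suc first_visitor_other_Suc Suc by simp
qed

end

end

lemma run_queue_cong:
  assumes "\<forall>j\<in>set xs. sz j = sz' j"
  shows "run_queue n T sz st xs = run_queue n T sz' st xs"
  using assms by (induction xs arbitrary: st) (simp_all add: run_queue_def)

definition entries_le :: "enat list \<Rightarrow> nat \<Rightarrow> bool" where
  "entries_le x i \<longleftrightarrow> (\<forall>p<length x. x ! p = \<infinity> \<or> (\<exists>v. x ! p = enat v \<and> v \<le> i))"

lemma entries_le_mono: "entries_le x i \<Longrightarrow> i \<le> i' \<Longrightarrow> entries_le x i'"
  unfolding entries_le_def by force

lemma entry_order_sorted:
  assumes "a \<le> b" "b < length (entry_order n x i)"
  shows "psize x i (entry_order n x i ! a) \<le> psize x i (entry_order n x i ! b)"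
proof -
  let ?f = "\<lambda>j. (psize x i j, j)"
  have s: "sorted (map ?f (entry_order n x i))" unfolding entry_order_def by (rule sorted_sort_key)
  have "map ?f (entry_order n x i) ! a \<le> map ?f (entry_order n x i) ! b"
    using sorted_nth_mono[OF s assms(1)] assms(2) by simp
  then show ?thesis using assms by (auto simp: less_eq_prod_def)
qed

lemma set_entry_order: "set (entry_order n x i) = {..<n}"
  by (simp add: entry_order_def lessThan_atLeast0)

lemma length_entry_order: "length (entry_order n x i) = n"
  by (simp add: entry_order_def)

lemma length_queue_out[simp]: "length (queue_out n T i x) = n"
  by (simp add: queue_out_def)

lemma psize_le: "entries_le x i \<Longrightarrow> j < length x \<Longrightarrow> psize x i j \<le> i"
  unfolding entries_le_def psize_def
  by (metis enat.simps(4) enat.simps(5) order_refl)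

context
  fixes n i :: nat and x :: "enat list"
  assumes length_x: "length x = n" and x_le: "entries_le x i"
begin

text \<open>\<open>psize x i\<close> is meaningless beyond the word; this version is bounded everywhere.\<close>

definition entry_size :: "nat \<Rightarrow> nat" where
  "entry_size j = (if j < n then psize x i j else 0)"

lemma queue_state_eq_run: "queue_state n U i x = run_queue n U entry_size empty_state (entry_order n x i)"
proof -
  have "queue_state n U i x = run_queue n U (psize x i) empty_state (entry_order n x i)"
    by (rule queue_state_run)
  also have "\<dots> = run_queue n U entry_size empty_state (entry_order n x i)"
    by (rule run_queue_cong) (auto simp: entry_size_def set_entry_order)
  finally show ?thesis .
qed

lemma entry_order_sub: "set (entry_order n x i) \<subseteq> {..<n}"
  by (simp add: set_entry_order)

lemma entry_size_mono:
  assumes "a \<le> b" "b < length (entry_order n x i)"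
  shows "entry_size (entry_order n x i ! a) \<le> entry_size (entry_order n x i ! b)"
proof -
  have "entry_order n x i ! a \<in> set (entry_order n x i)" "entry_order n x i ! b \<in> set (entry_order n x i)"
    using assms by auto
  then have "entry_order n x i ! a < n" "entry_order n x i ! b < n"
    using entry_order_sub by auto
  then show ?thesis using entry_order_sorted[OF assms] by (simp add: entry_size_def)
qed

lemma entry_size_le: "entry_size j \<le> i"
  using psize_le[OF x_le] length_x by (simp add: entry_size_def)

lemma entries_le_queue_out: "entries_le (queue_out n T i x) i"
  unfolding entries_le_def
proof (intro allI impI)
  fix p assume "p < length (queue_out n T i x)"
  then have p: "p < n" by simp
  show "queue_out n T i x ! p = \<infinity> \<or> (\<exists>v. queue_out n T i x ! p = enat v \<and> v \<le> i)"
  proof (cases "p \<in> T \<and> fst (queue_state n T i x) p \<noteq> \<infinity>")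
    case True
    then obtain j where "fst (queue_state n T i x) p = enat (entry_size j)"
      using run_fst_value[OF entry_order_sub] by (fastforce simp: queue_state_eq_run)
    then show ?thesis using True p entry_size_le by (auto simp: queue_out_def)
  qed (use p in \<open>auto simp: queue_out_def\<close>)
qed

lemma queue_state_full:
  assumes "U \<subseteq> {..<n}" "p \<in> U"
  shows "fst (queue_state n U i x) p \<noteq> \<infinity>"
proof -
  let ?occ = "fst (queue_state n U i x)"
  have "card (free_terminals U ?occ) = card (free_terminals U (fst empty_state)) - n"
    using card_free_terminals_run[OF entry_order_sub assms(1)] queue_state_eq_run length_entry_order by simp
  moreover have "card (free_terminals U (fst empty_state)) \<le> n"
    using card_mono[of "{..<n}" "free_terminals U (fst empty_state)"] assms by (auto simp: free_terminals_def)
  moreover have "finite (free_terminals U ?occ)"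
    by (rule finite_subset[of _ "{..<n}"]) (use assms in \<open>auto simp: free_terminals_def\<close>)
  ultimately show ?thesis using assms(2) by (auto simp: free_terminals_def)
qed

lemma marked_occ_queue_state:
  assumes "U \<subseteq> {..<n}"
  shows "marked_occ n M U (fst (queue_state n U i x)) = queue_out n U i x"
proof (rule nth_equalityI)
  fix p assume "p < length (marked_occ n M U (fst (queue_state n U i x)))"
  then show "marked_occ n M U (fst (queue_state n U i x)) ! p = queue_out n U i x ! p"
    using queue_state_full[OF assms, of p] by (auto simp: nth_marked_occ queue_out_def)
qed simp

lemma queue_out_remove_terminal:
  assumes "j0 < n" "j0 \<in> T" "T \<subseteq> {..<n}"
  shows "queue_out n (T - {j0}) i x = jump (queue_out n T i x) j0"
  using marked_occ_run_remove_terminal[where sz = entry_size and M = "Suc i",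
      OF entry_order_sub entry_size_mono _ assms(1,2) order_refl]
    entry_size_le marked_occ_queue_state[OF assms(3)] marked_occ_queue_state[of "T - {j0}"] assms
  by (simp add: queue_state_eq_run le_imp_less_Suc subset_iff)

lemma first_visitor_queue_remove_terminal:
  assumes j0: "j0 < n" "j0 \<in> T" and T: "T \<subseteq> {..<n}"
    and target: "d < n" "queue_out n T i x ! ((j0 + d) mod n) = enat i"
      "\<forall>d'<d. queue_out n T i x ! ((j0 + d') mod n) \<noteq> \<infinity>"
  shows "snd (queue_state n (T - {j0}) i x) j0 = queue_out n T i x ! j0"
    and "p < n \<Longrightarrow> p \<notin> T \<Longrightarrow> snd (queue_state n (T - {j0}) i x) p = snd (queue_state n T i x) p"
proof -
  let ?L = "entry_order n x i"
  have runs: "run_queue n U entry_size empty_state (take (length ?L) ?L) = queue_state n U i x" for U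
    by (simp add: queue_state_eq_run)
  have out: "marked_occ n (Suc i) T (fst (queue_state n T i x)) = queue_out n T i x"
    by (rule marked_occ_queue_state[OF T])
  have size: "entry_size j < Suc i" for j using entry_size_le le_imp_less_Suc by blast
  have targets: "marked_occ n (Suc i) T (fst (run_queue n T entry_size empty_state (take (length ?L) ?L))) ! ((j0 + d) mod n) = enat i"
    "\<forall>d'<d. marked_occ n (Suc i) T (fst (run_queue n T entry_size empty_state (take (length ?L) ?L))) ! ((j0 + d') mod n) \<noteq> \<infinity>"
    using target(2,3) by (simp_all only: runs out)
  have "snd (run_queue n (T - {j0}) entry_size empty_state (take (length ?L) ?L)) j0 =
      (if marked_occ n (Suc i) T (fst (run_queue n T entry_size empty_state (take (length ?L) ?L))) ! j0 = enat (Suc i)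
       then \<infinity> else marked_occ n (Suc i) T (fst (run_queue n T entry_size empty_state (take (length ?L) ?L))) ! j0)
    \<and> (\<forall>p<n. p \<notin> T \<longrightarrow> snd (run_queue n (T - {j0}) entry_size empty_state (take (length ?L) ?L)) p
          = snd (run_queue n T entry_size empty_state (take (length ?L) ?L)) p
        \<or> (snd (run_queue n T entry_size empty_state (take (length ?L) ?L)) p = \<infinity>
            \<and> snd (run_queue n (T - {j0}) entry_size empty_state (take (length ?L) ?L)) p = enat i))"
    by (rule first_visitor_run_remove_terminal[OF entry_order_sub])
      (use entry_size_mono size j0 T entry_size_le target(1) targets in auto)
  then have visitors: "snd (queue_state n (T - {j0}) i x) j0 =
      (if queue_out n T i x ! j0 = enat (Suc i) then \<infinity> else queue_out n T i x ! j0)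
    \<and> (\<forall>p<n. p \<notin> T \<longrightarrow> snd (queue_state n (T - {j0}) i x) p = snd (queue_state n T i x) p
        \<or> (snd (queue_state n T i x) p = \<infinity> \<and> snd (queue_state n (T - {j0}) i x) p = enat i))"
    unfolding runs out .
  have "queue_out n T i x ! j0 = \<infinity> \<or> (\<exists>v. queue_out n T i x ! j0 = enat v \<and> v \<le> i)"
    using entries_le_queue_out[of T] j0(1) by (simp add: entries_le_def)
  then have "queue_out n T i x ! j0 \<noteq> enat (Suc i)" by auto
  then show "snd (queue_state n (T - {j0}) i x) j0 = queue_out n T i x ! j0"
    using visitors by simp
  assume p: "p < n" "p \<notin> T"
  have "snd (queue_state n T i x) p \<noteq> \<infinity>"
    using run_snd_visited[OF entry_order_sub] p(1) by (simp add: queue_state_eq_run set_entry_order)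
  then show "snd (queue_state n (T - {j0}) i x) p = snd (queue_state n T i x) p"
    using conjunct2[OF visitors] p by auto
qed

lemma queue_weight_remove_terminal:
  assumes j0: "j0 < n" "j0 \<in> T" and T: "T \<subseteq> {..<n}"
    and target: "d < n" "queue_out n T i x ! ((j0 + d) mod n) = enat i"
      "\<forall>d'<d. queue_out n T i x ! ((j0 + d') mod n) \<noteq> \<infinity>"
  shows "queue_weight n (T - {j0}) i x t = t (the_enat (queue_out n T i x ! j0)) * queue_weight n T i x t"
proof -
  note visitors = first_visitor_queue_remove_terminal[OF j0 T target]
  have sites: "{p. p < n \<and> p \<notin> T - {j0}} = insert j0 {p. p < n \<and> p \<notin> T}" using j0 by auto
  have "queue_weight n (T - {j0}) i x t = t (the_enat (snd (queue_state n (T - {j0}) i x) j0))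
        * (\<Prod>p\<in>{p. p < n \<and> p \<notin> T}. t (the_enat (snd (queue_state n (T - {j0}) i x) p)))"
    unfolding queue_weight_def sites by (rule prod.insert) (use j0 in auto)
  also have "(\<Prod>p\<in>{p. p < n \<and> p \<notin> T}. t (the_enat (snd (queue_state n (T - {j0}) i x) p)))
      = queue_weight n T i x t"
    unfolding queue_weight_def by (rule prod.cong) (auto simp: visitors(2))
  finally show ?thesis using visitors(1) by simp
qed

end

lemma mlq_input_Suc:
  assumes "k < length Ts"
  shows "mlq_input n Ts (Suc k) = queue_out n (Ts ! k) (Suc k) (mlq_input n Ts k)"
proof -
  have u: "[1..<Suc (Suc k)] = [1..<Suc k] @ [Suc k]" by simp
  have t: "take (Suc k) Ts = take k Ts @ [Ts ! k]" using assms by (simp add: take_Suc_conv_app_nth)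
  have l: "length [1..<Suc k] = length (take k Ts)" using assms by simp
  have "zip [1..<Suc (Suc k)] (take (Suc k) Ts) = zip [1..<Suc k] (take k Ts) @ [(Suc k, Ts ! k)]"
    unfolding u t using zip_append[OF l] by simp
  then show ?thesis unfolding mlq_input_def by simp
qed

lemma length_mlq_input: "k \<le> length Ts \<Longrightarrow> length (mlq_input n Ts k) = n"
proof (induction k)
  case 0 then show ?case by (simp add: mlq_input_def)
next
  case (Suc k) then show ?case using mlq_input_Suc[of k Ts n] by simp
qed

lemma entries_le_mlq_input: "k \<le> length Ts \<Longrightarrow> entries_le (mlq_input n Ts k) k"
proof (induction k)
  case 0 then show ?case by (simp add: mlq_input_def entries_le_def)
next
  case (Suc k)
  then have k: "k < length Ts" by simp
  have "entries_le (mlq_input n Ts k) (Suc k)" using Suc entries_le_mono by simp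
  then show ?case using mlq_input_Suc[OF k] entries_le_queue_out length_mlq_input[of k Ts n] k by simp
qed

lemma mlq_input_eq:
  assumes "\<forall>i<k. P ! i = Q ! i" "k \<le> length P" "k \<le> length Q"
  shows "mlq_input n P k = mlq_input n Q k"
proof -
  have "take k P = take k Q" using assms by (intro nth_equalityI) auto
  then show ?thesis by (simp add: mlq_input_def)
qed

lemma mlq_word_last: "length Ts = Suc k \<Longrightarrow> mlq_word n Ts = queue_out n (Ts ! k) (Suc k) (mlq_input n Ts k)"
  using mlq_input_Suc[of k Ts n] by (simp add: mlq_word_def)

lemma mlq_weight_last:
  "length Ts = Suc k \<Longrightarrow> mlq_weight n Ts t =
     (\<Prod>i<k. queue_weight n (Ts ! i) (Suc i) (mlq_input n Ts i) t) * queue_weight n (Ts ! k) (Suc k) (mlq_input n Ts k) t"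
  by (simp add: mlq_weight_def)

lemma mlq_replace_last_row:
  assumes "length P = Suc k" "length Q = Suc k" "\<forall>i<k. P ! i = Q ! i"
  obtains A where "mlq_word n P = queue_out n (P ! k) (Suc k) (mlq_input n P k)"
    "mlq_word n Q = queue_out n (Q ! k) (Suc k) (mlq_input n P k)"
    "mlq_weight n P t = A * queue_weight n (P ! k) (Suc k) (mlq_input n P k) t"
    "mlq_weight n Q t = A * queue_weight n (Q ! k) (Suc k) (mlq_input n P k) t"
proof
  have inputs: "mlq_input n Q i = mlq_input n P i" if "i \<le> k" for i
    using mlq_input_eq[of i Q P] assms that by auto
  define A where "A = (\<Prod>i<k. queue_weight n (P ! i) (Suc i) (mlq_input n P i) t)"
  have prod_Q: "(\<Prod>i<k. queue_weight n (Q ! i) (Suc i) (mlq_input n Q i) t) = A"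
    using assms(3) inputs unfolding A_def by (intro prod.cong) auto
  show "mlq_weight n P t = A * queue_weight n (P ! k) (Suc k) (mlq_input n P k) t"
    unfolding mlq_weight_last[OF assms(1)] A_def ..
  show "mlq_weight n Q t = A * queue_weight n (Q ! k) (Suc k) (mlq_input n P k) t"
    unfolding mlq_weight_last[OF assms(2)] prod_Q inputs[OF order_refl] ..
  show "mlq_word n P = queue_out n (P ! k) (Suc k) (mlq_input n P k)"
    "mlq_word n Q = queue_out n (Q ! k) (Suc k) (mlq_input n P k)"
    using mlq_word_last[OF assms(1)] mlq_word_last[OF assms(2)] inputs by simp_all
qed

theorem lemma5p2:
  fixes n r j0 :: nat and mp mq :: "nat list" and P Q :: "nat set list"
    and t :: "nat \<Rightarrow> 'a::comm_monoid_mult"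
  assumes "is_mlq n mp P" and "is_mlq n mq Q"
    and "length P = r" and "length Q = r" and "1 \<le> r"
    and "\<forall>i < r - 1. P ! i = Q ! i"
    and "j0 < n"
    and "j0 \<in> P ! (r - 1)" and "j0 \<notin> Q ! (r - 1)"
    and "Q ! (r - 1) = P ! (r - 1) - {j0}"
  shows "mlq_word n Q = jump (mlq_word n P) j0
    \<and> ((\<exists>d < n. mlq_word n P ! ((j0 + d) mod n) = enat r
          \<and> (\<forall>d' < d. mlq_word n P ! ((j0 + d') mod n) \<noteq> \<infinity>))
       \<longrightarrow> mlq_weight n Q t = t (the_enat (mlq_word n P ! j0)) * mlq_weight n P t)"
proof -
  obtain k where r: "r = Suc k" using assms(5) by (cases r) auto
  define T where "T = P ! k"
  define x where "x = mlq_input n P k"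
  have T: "T \<subseteq> {..<n}" "j0 \<in> T" "Q ! k = T - {j0}" using assms(1,3,8,10) r by (auto simp: is_mlq_def T_def)
  have x: "length x = n" "entries_le x r"
    using length_mlq_input entries_le_mlq_input[of k P n] entries_le_mono assms(3) r by (auto simp: x_def)
  obtain A where words: "mlq_word n P = queue_out n T r x" "mlq_word n Q = queue_out n (T - {j0}) r x"
    and weights: "mlq_weight n P t = A * queue_weight n T r x t" "mlq_weight n Q t = A * queue_weight n (T - {j0}) r x t"
    using mlq_replace_last_row[of P k Q n t] assms(3,4,6) T(3) r by (auto simp: T_def x_def)
  show ?thesis
  proof (intro conjI impI)
    show "mlq_word n Q = jump (mlq_word n P) j0"
      using queue_out_remove_terminal[OF x assms(7) T(2,1)] words by simp
  next
    assume "\<exists>d < n. mlq_word n P ! ((j0 + d) mod n) = enat r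
          \<and> (\<forall>d' < d. mlq_word n P ! ((j0 + d') mod n) \<noteq> \<infinity>)"
    then have "queue_weight n (T - {j0}) r x t = t (the_enat (mlq_word n P ! j0)) * queue_weight n T r x t"
      using queue_weight_remove_terminal[OF x assms(7) T(2,1)] words(1) by auto
    then show "mlq_weight n Q t = t (the_enat (mlq_word n P ! j0)) * mlq_weight n P t"
      using weights by (simp add: mult.left_commute)
  qed
qed

end
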